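(* Fix $T>0$. Let $\theta:[0,T]\to[0,1]$ be continuous and let $\beta:[0,T]\to[\beta_*,\beta^*]$ be continuous. Then there exists a unique solution $\boldsymbol{x}=(S,E_{fc},E_{pc},I_{fc},I_{pc},H,R)$ on $[0,T]$ of the initial value problem \begin{align*} S' &= p_S-\Gamma S-\mu S,\\ E_{fc}' &= p_{Efc}+\theta\Gamma S-\Big(\gamma_{fc}+\gamma^{+}+\sigma_E+\mu-\tfrac{\gamma_E}{N}E_{pc}\Big)E_{fc},\\ E_{pc}' &= p_{Epc}+(1-\theta)\Gamma S-\Big(\gamma_{pc}+\gamma^{-}+\sigma_E+\mu+\tfrac{\gamma_E}{N}E_{fc}\Big)E_{pc},\\ I_{fc}' &= p_{Ifc}+\gamma_{fc}E_{fc}+\gamma^{-}E_{pc}-\Big(\delta+\sigma_I+d_I+\mu-\tfrac{\gamma_I}{N}I_{pc}\Big)I_{fc},\\ I_{pc}' &= p_{Ipc}+\gamma_{pc}E_{pc}+\gamma^{+}E_{fc}-\Big(\delta+\sigma_I+d_I+\mu+\tfrac{\gamma_I}{N}I_{fc}\Big)I_{pc},\\ H' &= p_H+\delta(I_{fc}+I_{pc})-(\sigma_H+d_H+\mu)H,\\ R' &= p_R+\sigma_E(E_{fc}+E_{pc})+\sigma_I(I_{fc}+I_{pc})+\sigma_H H-\mu R, \end{align*} with $N=S+E_{fc}+E_{pc}+I_{fc}+I_{pc}+H+R$, $\Gamma=\frac{\beta}{N}\big(\epsilon_{Efc}E_{fc}+\epsilon_{Epc}E_{pc}+\epsilon_{Ifc}I_{fc}+\epsilon_{Ipc}I_{pc}+\epsilon_H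 H\big)$, and initial data $S(0)=S_0>0$, $E_{fc}(0),E_{pc}(0),I_{fc}(0),I_{pc}(0),H(0),R(0)\ge 0$. Moreover, there is a constant $C>0$ independent of $\beta$ such that if $\boldsymbol{x}$ and $\hat{\boldsymbol{x}}$ are the solutions corresponding to two such continuous functions $\beta$ and $\hat\beta$ (with values in $[\beta_*,\beta^*]$), then for all $t\in[0,T]$, \[ |\boldsymbol{x}(t)-\hat{\boldsymbol{x}}(t)|^2\le C\int_0^t|\beta(s)-\hat\beta(s)|^2\,ds . \]
   Context: Standing assumptions: the input functions $p_S,p_{Efc},p_{Epc},p_{Ifc},p_{Ipc},p_H,p_R$ are bounded, nonnegative, smooth functions of $t$; the parameters $\mu,\epsilon_{Efc},\epsilon_{Epc},\epsilon_{Ifc},\epsilon_{Ipc},\epsilon_H,\gamma_{fc},\gamma_{pc},\gamma^{+},\gamma^{-},\delta,d_I,d_H,\sigma_E,\sigma_I,\sigma_H$ are positive constants; $\gamma_E,\gamma_I$ are real constants satisfying $|\gamma_E|<\min\{\gamma_{fc}+\gamma^{+}+\sigma_E+\mu,\ \gamma_{pc}+\gamma^{-}+\sigma_E+\mu\}$ and $|\gamma_I|<\delta+\sigma_I+d_I+\mu$; and $[\beta_*,\beta^*]\subset(0,1]$. *)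

theory Defs
  imports "HOL-Analysis.Analysis"
begin

record params =
  mu :: real
  eEfc :: real  eEpc :: real  eIfc :: real  eIpc :: real  eH :: real
  gfc :: real  gpc :: real  gplus :: real  gminus :: real
  delta :: real  dI :: real  dH :: real
  sigE :: real  sigI :: real  sigH :: real
  gamE :: real  gamI :: real
  pS :: "real \<Rightarrow> real"  pEfc :: "real \<Rightarrow> real"  pEpc :: "real \<Rightarrow> real"
  pIfc :: "real \<Rightarrow> real"  pIpc :: "real \<Rightarrow> real"  pH :: "real \<Rightarrow> real"
  pR :: "real \<Rightarrow> real"

record state =
  xS :: real  xEfc :: real  xEpc :: real  xIfc :: real  xIpc :: real
  xH :: real  xR :: real

definition smooth_fun :: "(real \<Rightarrow> real) \<Rightarrow> bool" where
  "smooth_fun f \<longleftrightarrow> (\<forall>n t. ((deriv ^^ n) f) differentiable (at t))"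

definition Ntot :: "state \<Rightarrow> real" where
  "Ntot x = xS x + xEfc x + xEpc x + xIfc x + xIpc x + xH x + xR x"

definition Gam :: "params \<Rightarrow> real \<Rightarrow> state \<Rightarrow> real" where
  "Gam P b x = b / Ntot x *
     (eEfc P * xEfc x + eEpc P * xEpc x + eIfc P * xIfc x + eIpc P * xIpc x + eH P * xH x)"

definition is_solution ::
  "params \<Rightarrow> real \<Rightarrow> (real \<Rightarrow> real) \<Rightarrow> (real \<Rightarrow> real) \<Rightarrow> state \<Rightarrow> (real \<Rightarrow> state) \<Rightarrow> bool" where
  "is_solution P T \<theta> \<beta> x0 x \<longleftrightarrow> x 0 = x0 \<and>
    (\<forall>t\<in>{0..T}.
      let y = x t; N = Ntot y; G = Gam P (\<beta> t) y in
      ((\<lambda>s. xS (x s)) has_real_derivative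
         (pS P t - G * xS y - mu P * xS y)) (at t within {0..T}) \<and>
      ((\<lambda>s. xEfc (x s)) has_real_derivative
         (pEfc P t + \<theta> t * G * xS y
          - (gfc P + gplus P + sigE P + mu P - gamE P / N * xEpc y) * xEfc y)) (at t within {0..T}) \<and>
      ((\<lambda>s. xEpc (x s)) has_real_derivative
         (pEpc P t + (1 - \<theta> t) * G * xS y
          - (gpc P + gminus P + sigE P + mu P + gamE P / N * xEfc y) * xEpc y)) (at t within {0..T}) \<and>
      ((\<lambda>s. xIfc (x s)) has_real_derivative
         (pIfc P t + gfc P * xEfc y + gminus P * xEpc y
          - (delta P + sigI P + dI P + mu P - gamI P / N * xIpc y) * xIfc y)) (at t within {0..T}) \<and>
      ((\<lambda>s. xIpc (x s)) has_real_derivative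
         (pIpc P t + gpc P * xEpc y + gplus P * xEfc y
          - (delta P + sigI P + dI P + mu P + gamI P / N * xIfc y) * xIpc y)) (at t within {0..T}) \<and>
      ((\<lambda>s. xH (x s)) has_real_derivative
         (pH P t + delta P * (xIfc y + xIpc y) - (sigH P + dH P + mu P) * xH y)) (at t within {0..T}) \<and>
      ((\<lambda>s. xR (x s)) has_real_derivative
         (pR P t + sigE P * (xEfc y + xEpc y) + sigI P * (xIfc y + xIpc y) + sigH P * xH y
          - mu P * xR y)) (at t within {0..T}))"

definition sdist2 :: "state \<Rightarrow> state \<Rightarrow> real" where
  "sdist2 x y = (xS x - xS y)\<^sup>2 + (xEfc x - xEfc y)\<^sup>2 + (xEpc x - xEpc y)\<^sup>2
     + (xIfc x - xIfc y)\<^sup>2 + (xIpc x - xIpc y)\<^sup>2 + (xH x - xH y)\<^sup>2 + (xR x - xR y)\<^sup>2"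

definition admissible_params :: "params \<Rightarrow> bool" where
  "admissible_params P \<longleftrightarrow>
    0 < mu P \<and> 0 < eEfc P \<and> 0 < eEpc P \<and> 0 < eIfc P \<and> 0 < eIpc P \<and> 0 < eH P \<and>
    0 < gfc P \<and> 0 < gpc P \<and> 0 < gplus P \<and> 0 < gminus P \<and> 0 < delta P \<and>
    0 < dI P \<and> 0 < dH P \<and> 0 < sigE P \<and> 0 < sigI P \<and> 0 < sigH P \<and>
    \<bar>gamE P\<bar> < min (gfc P + gplus P + sigE P + mu P) (gpc P + gminus P + sigE P + mu P) \<and>
    \<bar>gamI P\<bar> < delta P + sigI P + dI P + mu P \<and>
    (\<forall>p \<in> {pS P, pEfc P, pEpc P, pIfc P, pIpc P, pH P, pR P}.
       bounded (range p) \<and> (\<forall>t. 0 \<le> p t) \<and> smooth_fun p)"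

end

theory Submission
  imports Defs
begin

text \<open>
  The vector field is Lipschitz on every region where the compartments are bounded and N is
  bounded away from 0. Clamping the state componentwise to the box
  [S_min, N_max] x [0, N_max]^6 gives a globally Lipschitz system, which Picard iteration solves
  (with the Bielecki weight exp ((2 L + 1) t) the Picard map halves distances). A barrier argument
  shows that this solution never leaves the box: an empty compartment other than S cannot lose
  individuals, S decays at most at rate eps_Efc + ... + eps_H + mu, and the total population N
  decreases as soon as it exceeds N_max. Hence the clamping is inactive and we have a solution of
  the original system.

  For two solutions x and z with rates beta and beta', the Lipschitz bound gives the energy
  estimate d/dt |x - z|^2 <= 21 L |x - z|^2 + L (beta - beta')^2 as long as both lie in a
  neighbourhood of the box. For beta = beta' and x the solution above, this keeps z near x, and
  hence |x - z|^2 = 0 (uniqueness). Consequently every solution stays in the box, and Gronwall's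
  inequality turns the energy estimate into the stability bound.
\<close>

section \<open>Picard iteration\<close>

lemma exp_mult_has_integral:
  fixes c t :: real
  assumes "0 \<le> t" "c \<noteq> 0"
  shows "((\<lambda>s. exp (c * s)) has_integral (exp (c * t) - 1) / c) {0..t}"
proof -
  have "((\<lambda>s. exp (c * s)) has_integral exp (c * t) / c - exp (c * 0) / c) {0..t}"
  proof (rule fundamental_theorem_of_calculus)
    fix s assume "s \<in> {0..t}"
    show "((\<lambda>s. exp (c * s) / c) has_vector_derivative exp (c * s)) (at s within {0..t})"
      using assms by (auto intro!: derivative_eq_intros simp: has_real_derivative_iff_has_vector_derivative[symmetric])
  qed (use assms in auto)
  then show ?thesis
    by (simp add: diff_divide_distrib)
qed

locale lipschitz_ode =
  fixes F :: "real \<Rightarrow> 'a::banach \<Rightarrow> 'a" and T L :: real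
  assumes T_nonneg: "0 \<le> T" and L_nonneg: "0 \<le> L"
    and lipschitz: "\<And>t x y. t \<in> {0..T} \<Longrightarrow> norm (F t x - F t y) \<le> L * norm (x - y)"
    and F_continuous: "\<And>x. continuous_on {0..T} x \<Longrightarrow> continuous_on {0..T} (\<lambda>t. F t (x t))"
begin

definition picard :: "'a \<Rightarrow> (real \<Rightarrow> 'a) \<Rightarrow> real \<Rightarrow> 'a" where
  "picard x0 x t = x0 + integral {0..t} (\<lambda>s. F s (x s))"

lemma F_integrable:
  assumes "continuous_on {0..T} x" "t \<le> T"
  shows "(\<lambda>s. F s (x s)) integrable_on {0..t}"
  by (rule integrable_continuous_real, rule continuous_on_subset[OF F_continuous[OF assms(1)]])
    (use assms in auto)

lemma picard_continuous:
  assumes "continuous_on {0..T} x"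
  shows "continuous_on {0..T} (picard x0 x)"
  unfolding picard_def
  by (intro continuous_intros indefinite_integral_continuous_1 integrable_continuous_real
      F_continuous assms)

lemma norm_picard_diff_le:
  assumes x: "continuous_on {0..T} x" and y: "continuous_on {0..T} y" and t: "t \<in> {0..T}"
    and g: "g integrable_on {0..t}" "\<And>s. s \<in> {0..t} \<Longrightarrow> L * norm (x s - y s) \<le> g s"
  shows "norm (picard x0 x t - picard x0 y t) \<le> integral {0..t} g"
proof -
  have "picard x0 x t - picard x0 y t = integral {0..t} (\<lambda>s. F s (x s) - F s (y s))"
    using F_integrable[OF x] F_integrable[OF y] t by (simp add: picard_def integral_diff)
  also have "norm \<dots> \<le> integral {0..t} g"
  proof (rule integral_norm_bound_integral)
    show "(\<lambda>s. F s (x s) - F s (y s)) integrable_on {0..t}"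
      using F_integrable[OF x] F_integrable[OF y] t by (intro integrable_diff) auto
    fix s assume "s \<in> {0..t}"
    then show "norm (F s (x s) - F s (y s)) \<le> g s"
      using lipschitz[of s] g(2)[of s] t by (meson atLeastAtMost_iff order_trans)
  qed (fact g(1))
  finally show ?thesis .
qed

lemma picard_halves_weighted_distance:
  assumes x: "continuous_on {0..T} x" and y: "continuous_on {0..T} y" and t: "t \<in> {0..T}"
    and B: "\<And>s. s \<in> {0..T} \<Longrightarrow> norm (x s - y s) \<le> B * exp ((2 * L + 1) * s)"
  shows "norm (picard x0 x t - picard x0 y t) \<le> B / 2 * exp ((2 * L + 1) * t)"
proof -
  define r where "r = 2 * L + 1"
  have r: "0 < r" using L_nonneg by (simp add: r_def)
  have int: "((\<lambda>s. L * B * exp (r * s)) has_integral L * B * ((exp (r * t) - 1) / r)) {0..t}"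
    using exp_mult_has_integral[of t r] t r by (intro has_integral_mult_right) auto
  have "norm (picard x0 x t - picard x0 y t) \<le> integral {0..t} (\<lambda>s. L * B * exp (r * s))"
  proof (rule norm_picard_diff_le[OF x y t has_integral_integrable[OF int]])
    fix s assume "s \<in> {0..t}"
    then have "norm (x s - y s) \<le> B * exp (r * s)" using B t by (simp add: r_def)
    then show "L * norm (x s - y s) \<le> L * B * exp (r * s)"
      using L_nonneg by (simp add: mult.assoc mult_left_mono)
  qed
  also have "\<dots> = L * B * ((exp (r * t) - 1) / r)"
    using int by (rule integral_unique)
  also have "\<dots> \<le> B / 2 * exp (r * t)"
  proof -
    have "0 \<le> B"
      using order_trans[OF norm_ge_zero B[of 0]] T_nonneg by simp
    moreover have "L * (exp (r * t) - 1) / r \<le> exp (r * t) / 2"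
      using r L_nonneg by (simp add: r_def field_simps)
    ultimately show ?thesis
      using mult_left_mono[of _ _ B] by (fastforce simp: field_simps)
  qed
  finally show ?thesis by (simp add: r_def)
qed

definition picard_iterate :: "'a \<Rightarrow> nat \<Rightarrow> real \<Rightarrow> 'a" where
  "picard_iterate x0 n = (picard x0 ^^ n) (\<lambda>_. x0)"

lemma picard_iterate_0: "picard_iterate x0 0 = (\<lambda>_. x0)"
  by (simp add: picard_iterate_def)

lemma picard_iterate_Suc: "picard_iterate x0 (Suc n) = picard x0 (picard_iterate x0 n)"
  by (simp add: picard_iterate_def)

lemma continuous_on_picard_iterate: "continuous_on {0..T} (picard_iterate x0 n)"
  by (induction n) (simp_all add: picard_iterate_0 picard_iterate_Suc picard_continuous)

lemma picard_iterate_step_le: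
  obtains B where
    "\<And>n t. t \<in> {0..T} \<Longrightarrow> norm (picard_iterate x0 (Suc n) t - picard_iterate x0 n t) \<le> B * (1 / 2) ^ n"
proof -
  define r where "r = 2 * L + 1"
  let ?X = "picard_iterate x0"
  obtain B where B: "\<And>t. t \<in> {0..T} \<Longrightarrow> norm (?X 1 t - ?X 0 t) \<le> B"
    using compact_imp_bounded[OF compact_continuous_image[OF continuous_on_diff[OF
          continuous_on_picard_iterate[of x0 1] continuous_on_picard_iterate[of x0 0]]]] compact_Icc
    by (force simp: bounded_iff)
  have "0 \<le> B"
    using order_trans[OF norm_ge_zero B[of 0]] T_nonneg by simp
  have weighted: "norm (?X (Suc n) t - ?X n t) \<le> B / 2 ^ n * exp (r * t)" if "t \<in> {0..T}" for n t
    using that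
  proof (induction n arbitrary: t)
    case 0
    have "1 \<le> exp (r * t)"
      using 0 L_nonneg by (simp add: r_def)
    then have "B \<le> B * exp (r * t)"
      using \<open>0 \<le> B\<close> mult_left_mono[of 1 _ B] by simp
    then show ?case
      using B[OF 0] by simp
  next
    case (Suc n)
    have "norm (picard x0 (?X (Suc n)) t - picard x0 (?X n) t) \<le> B / 2 ^ n / 2 * exp (r * t)"
      unfolding r_def
      by (rule picard_halves_weighted_distance[OF continuous_on_picard_iterate
            continuous_on_picard_iterate Suc.prems])
        (use Suc.IH in \<open>simp add: r_def\<close>)
    then show ?case
      by (simp add: picard_iterate_Suc)
  qed
  show ?thesis
  proof (rule that[of "B * exp (r * T)"])
    fix n t assume t: "t \<in> {0..T}"
    have "exp (r * t) \<le> exp (r * T)"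
      using t L_nonneg by (simp add: r_def mult_left_mono)
    then show "norm (?X (Suc n) t - ?X n t) \<le> B * exp (r * T) * (1 / 2) ^ n"
      using weighted[OF t, of n] \<open>0 \<le> B\<close> mult_left_mono[of "exp (r * t)" "exp (r * T)" "B / 2 ^ n"]
      by (simp add: power_one_over field_simps)
  qed
qed

lemma picard_iterate_uniform_limit:
  obtains x where "uniform_limit {0..T} (picard_iterate x0) x sequentially"
proof -
  let ?X = "picard_iterate x0"
  obtain B where B: "\<And>n t. t \<in> {0..T} \<Longrightarrow> norm (?X (Suc n) t - ?X n t) \<le> B * (1 / 2) ^ n"
    using picard_iterate_step_le by blast
  have "uniform_limit {0..T} (\<lambda>n t. \<Sum>i<n. ?X (Suc i) t - ?X i t) (\<lambda>t. \<Sum>n. ?X (Suc n) t - ?X n t)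
      sequentially"
    by (rule Weierstrass_m_test[OF B]) (auto intro: summable_mult summable_geometric)
  then have "uniform_limit {0..T} (\<lambda>n t. x0 + (\<Sum>i<n. ?X (Suc i) t - ?X i t))
      (\<lambda>t. x0 + (\<Sum>n. ?X (Suc n) t - ?X n t)) sequentially"
    by (intro uniform_limit_intros)
  moreover have "(\<Sum>i<n. ?X (Suc i) t - ?X i t) = ?X n t - x0" for n t
    using sum_lessThan_telescope[of "\<lambda>i. ?X i t"] by (simp add: picard_iterate_0)
  ultimately show ?thesis
    using that by simp
qed

lemma picard_tendsto_uniform_limit:
  assumes X_lim: "uniform_limit {0..T} X x sequentially"
    and X_cont: "\<And>n. continuous_on {0..T} (X n)" and x_cont: "continuous_on {0..T} x"
    and t: "t \<in> {0..T}"
  shows "(\<lambda>n. picard x0 (X n) t) \<longlonglongrightarrow> picard x0 x t"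
proof (rule tendstoI)
  fix e :: real assume "0 < e"
  define e' where "e' = e / (L * T + 1)"
  have "0 < L * T + 1"
    using L_nonneg T_nonneg by (simp add: add_nonneg_pos)
  then have "0 < e'" and "L * T * e' < e"
    using \<open>0 < e\<close> by (simp_all add: e'_def field_simps)
  have "\<forall>\<^sub>F n in sequentially. \<forall>s\<in>{0..T}. dist (X n s) (x s) < e'"
    using X_lim \<open>0 < e'\<close> by (rule uniform_limitD)
  then show "\<forall>\<^sub>F n in sequentially. dist (picard x0 (X n) t) (picard x0 x t) < e"
  proof eventually_elim
    case (elim n)
    have "norm (picard x0 (X n) t - picard x0 x t) \<le> integral {0..t} (\<lambda>s. L * e')"
    proof (rule norm_picard_diff_le[OF X_cont x_cont t integrable_const_ivl])
      fix s assume "s \<in> {0..t}"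
      then have "norm (X n s - x s) < e'"
        using elim t by (simp add: dist_norm)
      then show "L * norm (X n s - x s) \<le> L * e'"
        using L_nonneg by (simp add: mult_left_mono)
    qed
    also have "\<dots> = L * e' * t"
      using t by (simp add: mult_ac)
    also have "\<dots> \<le> L * e' * T"
      using t L_nonneg \<open>0 < e'\<close> by (intro mult_left_mono) auto
    finally show ?case
      using \<open>L * T * e' < e\<close> by (simp add: dist_norm mult_ac)
  qed
qed

lemma picard_fixpoint_exists:
  obtains x where "continuous_on {0..T} x" "\<And>t. t \<in> {0..T} \<Longrightarrow> x t = picard x0 x t"
proof -
  obtain x where X_lim: "uniform_limit {0..T} (picard_iterate x0) x sequentially"
    using picard_iterate_uniform_limit by blast
  have x_cont: "continuous_on {0..T} x"
    by (rule uniform_limit_theorem[OF _ X_lim]) (simp_all add: continuous_on_picard_iterate)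
  have "x t = picard x0 x t" if t: "t \<in> {0..T}" for t
  proof (rule LIMSEQ_unique)
    show "(\<lambda>n. picard_iterate x0 (Suc n) t) \<longlonglongrightarrow> x t"
      using LIMSEQ_Suc[OF tendsto_uniform_limitI[OF X_lim t]] .
    show "(\<lambda>n. picard_iterate x0 (Suc n) t) \<longlonglongrightarrow> picard x0 x t"
      unfolding picard_iterate_Suc
      by (rule picard_tendsto_uniform_limit[OF X_lim continuous_on_picard_iterate x_cont t])
  qed
  with x_cont that show ?thesis
    by blast
qed

lemma solution_exists:
  obtains x where "x 0 = x0" "\<And>t. t \<in> {0..T} \<Longrightarrow> (x has_vector_derivative F t (x t)) (at t within {0..T})"
proof -
  obtain x where x_cont: "continuous_on {0..T} x" and x_fix: "\<And>t. t \<in> {0..T} \<Longrightarrow> x t = picard x0 x t"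
    using picard_fixpoint_exists[of x0] by blast
  show ?thesis
  proof
    show "x 0 = x0"
      using x_fix[of 0] T_nonneg by (simp add: picard_def)
    fix t assume t: "t \<in> {0..T}"
    have "(picard x0 x has_vector_derivative F t (x t)) (at t within {0..T})"
      using has_vector_derivative_add[OF has_vector_derivative_const
          integral_has_vector_derivative[OF F_continuous[OF x_cont] t]]
      by (simp add: picard_def[abs_def])
    then show "(x has_vector_derivative F t (x t)) (at t within {0..T})"
      using has_vector_derivative_transform[of t "{0..T}" x "picard x0 x"] t x_fix by blast
  qed
qed

end

section \<open>Differential inequalities\<close>

lemma increasing_if_deriv_nonneg:
  fixes u u' :: "real \<Rightarrow> real"
  assumes "a \<le> b" and u: "\<And>t. t \<in> {a..b} \<Longrightarrow> (u has_real_derivative u' t) (at t within {a..b})"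
    and nonneg: "\<And>t. a < t \<Longrightarrow> t < b \<Longrightarrow> 0 \<le> u' t"
  shows "u a \<le> u b"
proof (rule DERIV_nonneg_imp_increasing_open[OF \<open>a \<le> b\<close>])
  show "continuous_on {a..b} u"
    using u by (meson DERIV_continuous continuous_on_eq_continuous_within)
  fix t assume t: "a < t" "t < b"
  then have "(u has_real_derivative u' t) (at t)"
    using u[of t] at_within_Icc_at[OF t] by simp
  then show "\<exists>y. (u has_real_derivative y) (at t) \<and> 0 \<le> y"
    using nonneg[OF t] by blast
qed

lemma last_nonneg_before_neg:
  fixes u :: "real \<Rightarrow> real"
  assumes "0 \<le> t1" and u_cont: "continuous_on {0..t1} u" and "0 \<le> u 0" and "u t1 < 0"
  obtains t0 where "0 \<le> t0" "t0 < t1" "0 \<le> u t0" "\<And>s. t0 < s \<Longrightarrow> s \<le> t1 \<Longrightarrow> u s < 0"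
proof -
  define A where "A = {0..t1} \<inter> u -` {0..}"
  have "closed A"
    unfolding A_def using u_cont by (intro continuous_closed_preimage) auto
  moreover have "0 \<in> A" and A_bdd: "bdd_above A"
    using \<open>0 \<le> u 0\<close> \<open>0 \<le> t1\<close> by (auto simp: A_def)
  ultimately have "Sup A \<in> A"
    by (intro closed_contains_Sup) auto
  show ?thesis
  proof (rule that[of "Sup A"])
    show "0 \<le> Sup A" "0 \<le> u (Sup A)" "Sup A < t1"
      using \<open>Sup A \<in> A\<close> \<open>u t1 < 0\<close> by (auto simp: A_def less_le)
    show "u s < 0" if "Sup A < s" "s \<le> t1" for s
      using cSup_upper[OF _ A_bdd, of s] that \<open>Sup A \<in> A\<close> by (force simp: A_def)
  qed
qed

lemma nonneg_if_deriv_nonneg_when_slightly_neg: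
  fixes u u' :: "real \<Rightarrow> real"
  assumes u: "\<And>t. t \<in> {0..T} \<Longrightarrow> (u has_real_derivative u' t) (at t within {0..T})"
    and "0 \<le> u 0" and "0 < \<delta>"
    and barrier: "\<And>t. t \<in> {0..T} \<Longrightarrow> - \<delta> < u t \<Longrightarrow> u t < 0 \<Longrightarrow> 0 \<le> u' t"
    and t1: "t1 \<in> {0..T}"
  shows "0 \<le> u t1"
proof (rule ccontr)
  assume "\<not> 0 \<le> u t1"
  have u_cont: "continuous_on {0..T} u"
    using u by (meson DERIV_continuous continuous_on_eq_continuous_within)
  have "continuous_on {0..t1} u"
    using t1 by (intro continuous_on_subset[OF u_cont]) simp
  then obtain t0 where t0: "0 \<le> t0" "t0 < t1" "0 \<le> u t0"
    and neg: "\<And>s. t0 < s \<Longrightarrow> s \<le> t1 \<Longrightarrow> u s < 0"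
    using last_nonneg_before_neg[of t1 u] t1 \<open>0 \<le> u 0\<close> \<open>\<not> 0 \<le> u t1\<close> by auto
  have "t0 \<in> {0..T}"
    using t0 t1 by auto
  then obtain \<eta> where "0 < \<eta>" and \<eta>: "\<And>s. s \<in> {0..T} \<Longrightarrow> dist s t0 < \<eta> \<Longrightarrow> dist (u s) (u t0) < \<delta>"
    using u_cont[unfolded continuous_on_iff] \<open>0 < \<delta>\<close> by blast
  define t2 where "t2 = min t1 (t0 + \<eta> / 2)"
  have t2: "t0 < t2" "t2 \<le> t1"
    using t0 \<open>0 < \<eta>\<close> by (auto simp: t2_def)
  have "u t0 \<le> u t2"
  proof (rule increasing_if_deriv_nonneg[OF less_imp_le[OF \<open>t0 < t2\<close>]])
    fix s assume "s \<in> {t0..t2}"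
    then show "(u has_real_derivative u' s) (at s within {t0..t2})"
      using u[of s] t0 t1 t2 by (auto intro: DERIV_subset)
  next
    fix s assume s: "t0 < s" "s < t2"
    then have "s \<in> {0..T}" "dist s t0 < \<eta>"
      using t0 t1 t2 by (auto simp: t2_def dist_real_def)
    then have "\<bar>u s - u t0\<bar> < \<delta>"
      using \<eta> by (simp add: dist_real_def)
    then show "0 \<le> u' s"
      using barrier \<open>s \<in> {0..T}\<close> neg s t2 t0 by (simp add: abs_less_iff)
  qed
  then show False
    using neg[of t2] t0 t2 by simp
qed

lemma zero_if_deriv_le_mult_near_zero:
  fixes u u' :: "real \<Rightarrow> real"
  assumes u: "\<And>t. t \<in> {0..T} \<Longrightarrow> (u has_real_derivative u' t) (at t within {0..T})"
    and "u 0 = 0" and nonneg: "\<And>t. t \<in> {0..T} \<Longrightarrow> 0 \<le> u t" and "0 < \<delta>" and "0 \<le> L"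
    and growth: "\<And>t. t \<in> {0..T} \<Longrightarrow> u t < \<delta> \<Longrightarrow> u' t \<le> L * u t"
    and t1: "t1 \<in> {0..T}"
  shows "u t1 = 0"
proof -
  define w where "w t = - (exp (- (L * t)) * u t)" for t
  have "0 \<le> w t1"
  proof (rule nonneg_if_deriv_nonneg_when_slightly_neg[OF _ _ _ _ t1])
    fix t assume t: "t \<in> {0..T}"
    show "(w has_real_derivative exp (- (L * t)) * (L * u t - u' t)) (at t within {0..T})"
      unfolding w_def using u[OF t]
      by (auto intro!: derivative_eq_intros simp: algebra_simps)
    assume "- (\<delta> * exp (- (L * T))) < w t"
    then have "exp (- (L * t)) * u t < exp (- (L * t)) * (\<delta> * exp (L * (t - T)))"
      by (simp add: w_def algebra_simps flip: exp_add)
    then have "u t < \<delta> * exp (L * (t - T))"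
      by simp
    also have "\<dots> \<le> \<delta>"
      using t \<open>0 \<le> L\<close> \<open>0 < \<delta>\<close> by (simp add: mult_nonneg_nonpos)
    finally show "0 \<le> exp (- (L * t)) * (L * u t - u' t)"
      using growth[OF t] by simp
  qed (use \<open>u 0 = 0\<close> \<open>0 < \<delta>\<close> in \<open>auto simp: w_def\<close>)
  then show ?thesis
    using nonneg[OF t1] by (simp add: w_def mult_le_0_iff)
qed

lemma gronwall:
  fixes u u' g :: "real \<Rightarrow> real"
  assumes "a \<le> b" and u: "\<And>t. t \<in> {a..b} \<Longrightarrow> (u has_real_derivative u' t) (at t within {a..b})"
    and growth: "\<And>t. t \<in> {a..b} \<Longrightarrow> u' t \<le> A * u t + g t" and "0 \<le> A"
    and g: "continuous_on {a..b} g" "\<And>t. t \<in> {a..b} \<Longrightarrow> 0 \<le> g t"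
  shows "u b \<le> exp (A * (b - a)) * (u a + integral {a..b} g)"
proof -
  define w where "w t = integral {a..t} g - exp (- (A * (t - a))) * u t" for t
  have "w a \<le> w b"
  proof (rule increasing_if_deriv_nonneg[OF \<open>a \<le> b\<close>])
    fix t assume t: "t \<in> {a..b}"
    show "(w has_real_derivative g t - exp (- (A * (t - a))) * (u' t - A * u t)) (at t within {a..b})"
      unfolding w_def using u[OF t] integral_has_real_derivative[OF g(1) t]
      by (auto intro!: derivative_eq_intros simp: algebra_simps)
  next
    fix t assume "a < t" "t < b"
    then have t: "t \<in> {a..b}" by simp
    have "exp (- (A * (t - a))) * (u' t - A * u t) \<le> exp (- (A * (t - a))) * g t"
      using growth[OF t] by (intro mult_left_mono) auto
    also have "\<dots> \<le> g t"
      using \<open>a < t\<close> \<open>0 \<le> A\<close> g(2)[OF t] by (intro mult_left_le_one_le) auto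
    finally show "0 \<le> g t - exp (- (A * (t - a))) * (u' t - A * u t)"
      by simp
  qed
  then have "exp (- (A * (b - a))) * u b \<le> u a + integral {a..b} g"
    by (simp add: w_def)
  then have "exp (A * (b - a)) * (exp (- (A * (b - a))) * u b)
      \<le> exp (A * (b - a)) * (u a + integral {a..b} g)"
    by (intro mult_left_mono) auto
  moreover have "exp (A * (b - a)) * exp (- (A * (b - a))) = 1"
    by (simp add: exp_minus)
  ultimately show ?thesis
    by (simp add: mult.assoc[symmetric])
qed

section \<open>Uniformly bounded Lipschitz families\<close>

definition bounded_lipschitz_family ::
    "('a \<Rightarrow> 'a \<Rightarrow> real) \<Rightarrow> 'i set \<Rightarrow> 'a set \<Rightarrow> ('i \<Rightarrow> 'a \<Rightarrow> real) \<Rightarrow> bool" where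
  "bounded_lipschitz_family d I A f \<longleftrightarrow>
     (\<exists>B L. \<forall>i\<in>I. \<forall>p\<in>A. \<forall>q\<in>A. \<bar>f i p\<bar> \<le> B \<and> \<bar>f i p - f i q\<bar> \<le> L * d p q)"

lemma bounded_lipschitz_familyI:
  assumes "\<And>i p q. i \<in> I \<Longrightarrow> p \<in> A \<Longrightarrow> q \<in> A \<Longrightarrow> \<bar>f i p\<bar> \<le> B \<and> \<bar>f i p - f i q\<bar> \<le> L * d p q"
  shows "bounded_lipschitz_family d I A f"
  unfolding bounded_lipschitz_family_def using assms by blast

lemma bounded_lipschitz_familyE:
  assumes "bounded_lipschitz_family d I A f"
  obtains B L where
    "\<And>i p q. i \<in> I \<Longrightarrow> p \<in> A \<Longrightarrow> q \<in> A \<Longrightarrow> \<bar>f i p\<bar> \<le> B \<and> \<bar>f i p - f i q\<bar> \<le> L * d p q"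
  using assms unfolding bounded_lipschitz_family_def by blast

lemma bounded_lipschitz_family_const: "bounded_lipschitz_family d I A (\<lambda>i p. c)"
  by (rule bounded_lipschitz_familyI[where B = "\<bar>c\<bar>" and L = "0"]) auto

lemma bounded_lipschitz_family_index:
  assumes "bounded (h ` I)"
  shows "bounded_lipschitz_family d I A (\<lambda>i p. h i)"
proof -
  obtain B where "\<And>i. i \<in> I \<Longrightarrow> \<bar>h i\<bar> \<le> B"
    using assms by (auto simp: bounded_iff)
  then show ?thesis
    by (intro bounded_lipschitz_familyI[where B = "B" and L = "0"]) auto
qed

lemma bounded_lipschitz_family_point:
  assumes "\<And>p. p \<in> A \<Longrightarrow> \<bar>g p\<bar> \<le> B" and "\<And>p q. p \<in> A \<Longrightarrow> q \<in> A \<Longrightarrow> \<bar>g p - g q\<bar> \<le> L * d p q"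
  shows "bounded_lipschitz_family d I A (\<lambda>i p. g p)"
  using assms by (intro bounded_lipschitz_familyI[where B = "B" and L = "L"]) auto

lemma bounded_lipschitz_family_add:
  assumes "bounded_lipschitz_family d I A f" "bounded_lipschitz_family d I A g"
  shows "bounded_lipschitz_family d I A (\<lambda>i p. f i p + g i p)"
proof -
  obtain B1 L1 where
    f: "\<And>i p q. i \<in> I \<Longrightarrow> p \<in> A \<Longrightarrow> q \<in> A \<Longrightarrow> \<bar>f i p\<bar> \<le> B1 \<and> \<bar>f i p - f i q\<bar> \<le> L1 * d p q"
    using bounded_lipschitz_familyE[OF assms(1)] by blast
  obtain B2 L2 where
    g: "\<And>i p q. i \<in> I \<Longrightarrow> p \<in> A \<Longrightarrow> q \<in> A \<Longrightarrow> \<bar>g i p\<bar> \<le> B2 \<and> \<bar>g i p - g i q\<bar> \<le> L2 * d p q"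
    using bounded_lipschitz_familyE[OF assms(2)] by blast
  show ?thesis
  proof (rule bounded_lipschitz_familyI[where B = "B1 + B2" and L = "L1 + L2"])
    fix i p q assume "i \<in> I" "p \<in> A" "q \<in> A"
    then show "\<bar>f i p + g i p\<bar> \<le> B1 + B2 \<and> \<bar>f i p + g i p - (f i q + g i q)\<bar> \<le> (L1 + L2) * d p q"
      using f[of i p q] g[of i p q] by (auto simp: algebra_simps abs_le_iff)
  qed
qed

lemma bounded_lipschitz_family_minus:
  assumes "bounded_lipschitz_family d I A f"
  shows "bounded_lipschitz_family d I A (\<lambda>i p. - f i p)"
proof -
  obtain B L where "\<And>i p q. i \<in> I \<Longrightarrow> p \<in> A \<Longrightarrow> q \<in> A \<Longrightarrow> \<bar>f i p\<bar> \<le> B \<and> \<bar>f i p - f i q\<bar> \<le> L * d p q"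
    using bounded_lipschitz_familyE[OF assms] by blast
  then show ?thesis
    by (intro bounded_lipschitz_familyI[where B = "B" and L = "L"]) (auto simp: abs_minus_commute)
qed

lemma bounded_lipschitz_family_diff:
  assumes "bounded_lipschitz_family d I A f" "bounded_lipschitz_family d I A g"
  shows "bounded_lipschitz_family d I A (\<lambda>i p. f i p - g i p)"
  using bounded_lipschitz_family_add[OF assms(1) bounded_lipschitz_family_minus[OF assms(2)]]
  by simp

lemma bounded_lipschitz_family_mult:
  assumes "bounded_lipschitz_family d I A f" "bounded_lipschitz_family d I A g"
  shows "bounded_lipschitz_family d I A (\<lambda>i p. f i p * g i p)"
proof -
  obtain B1 L1 where
    f: "\<And>i p q. i \<in> I \<Longrightarrow> p \<in> A \<Longrightarrow> q \<in> A \<Longrightarrow> \<bar>f i p\<bar> \<le> B1 \<and> \<bar>f i p - f i q\<bar> \<le> L1 * d p q"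
    using bounded_lipschitz_familyE[OF assms(1)] by blast
  obtain B2 L2 where
    g: "\<And>i p q. i \<in> I \<Longrightarrow> p \<in> A \<Longrightarrow> q \<in> A \<Longrightarrow> \<bar>g i p\<bar> \<le> B2 \<and> \<bar>g i p - g i q\<bar> \<le> L2 * d p q"
    using bounded_lipschitz_familyE[OF assms(2)] by blast
  show ?thesis
  proof (rule bounded_lipschitz_familyI[where B = "B1 * B2" and L = "B1 * L2 + B2 * L1"])
    fix i p q assume ipq: "i \<in> I" "p \<in> A" "q \<in> A"
    note fp = f[OF ipq] and gp = g[OF ipq] and gq = g[OF ipq(1,3,3)]
    have "\<bar>f i p * g i p\<bar> \<le> B1 * B2"
      unfolding abs_mult using fp gp by (intro mult_mono) auto
    moreover have "\<bar>f i p * g i p - f i q * g i q\<bar>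
        \<le> \<bar>f i p\<bar> * \<bar>g i p - g i q\<bar> + \<bar>g i q\<bar> * \<bar>f i p - f i q\<bar>"
    proof -
      have "f i p * g i p - f i q * g i q = f i p * (g i p - g i q) + g i q * (f i p - f i q)"
        by (simp add: algebra_simps)
      then show ?thesis
        by (metis abs_mult abs_triangle_ineq)
    qed
    moreover have "\<bar>f i p\<bar> * \<bar>g i p - g i q\<bar> \<le> B1 * (L2 * d p q)"
      using fp gp by (intro mult_mono) auto
    moreover have "\<bar>g i q\<bar> * \<bar>f i p - f i q\<bar> \<le> B2 * (L1 * d p q)"
      using fp gq by (intro mult_mono) auto
    ultimately show "\<bar>f i p * g i p\<bar> \<le> B1 * B2 \<and>
        \<bar>f i p * g i p - f i q * g i q\<bar> \<le> (B1 * L2 + B2 * L1) * d p q"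
      by (simp add: algebra_simps)
  qed
qed

lemma bounded_lipschitz_family_inverse:
  assumes "bounded_lipschitz_family d I A g" "0 < m" "\<And>i p. i \<in> I \<Longrightarrow> p \<in> A \<Longrightarrow> m \<le> g i p"
  shows "bounded_lipschitz_family d I A (\<lambda>i p. 1 / g i p)"
proof -
  obtain B L where
    g: "\<And>i p q. i \<in> I \<Longrightarrow> p \<in> A \<Longrightarrow> q \<in> A \<Longrightarrow> \<bar>g i p\<bar> \<le> B \<and> \<bar>g i p - g i q\<bar> \<le> L * d p q"
    using bounded_lipschitz_familyE[OF assms(1)] by blast
  show ?thesis
  proof (rule bounded_lipschitz_familyI[where B = "1 / m" and L = "L / m\<^sup>2"])
    fix i p q assume ipq: "i \<in> I" "p \<in> A" "q \<in> A"
    have m: "m \<le> g i p" "m \<le> g i q"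
      using assms(3) ipq by auto
    have "\<bar>1 / g i p - 1 / g i q\<bar> = \<bar>g i p - g i q\<bar> / (g i p * g i q)"
      using m \<open>0 < m\<close> by (simp add: field_simps abs_minus_commute)
    also have "\<dots> \<le> \<bar>g i p - g i q\<bar> / m\<^sup>2"
      using m \<open>0 < m\<close> by (intro divide_left_mono) (auto simp: power2_eq_square intro: mult_mono)
    also have "\<dots> \<le> L / m\<^sup>2 * d p q"
      using g[OF ipq] by (simp add: divide_right_mono)
    finally show "\<bar>1 / g i p\<bar> \<le> 1 / m \<and> \<bar>1 / g i p - 1 / g i q\<bar> \<le> L / m\<^sup>2 * d p q"
      using m \<open>0 < m\<close> by (simp add: frac_le)
  qed
qed

lemma bounded_lipschitz_family_divide:
  assumes "bounded_lipschitz_family d I A f" "bounded_lipschitz_family d I A g"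
    and "0 < m" "\<And>i p. i \<in> I \<Longrightarrow> p \<in> A \<Longrightarrow> m \<le> g i p"
  shows "bounded_lipschitz_family d I A (\<lambda>i p. f i p / g i p)"
  using bounded_lipschitz_family_mult[OF assms(1) bounded_lipschitz_family_inverse[OF assms(2-4)]]
  by simp

lemma bounded_lipschitz_family_uniform:
  assumes "finite J" "\<And>j. j \<in> J \<Longrightarrow> bounded_lipschitz_family d I A (f j)"
    and d_nonneg: "\<And>p q. 0 \<le> d p q"
  obtains L where "0 \<le> L" "\<forall>j\<in>J. \<forall>i\<in>I. \<forall>p\<in>A. \<forall>q\<in>A. \<bar>f j i p - f j i q\<bar> \<le> L * d p q"
proof -
  have "\<forall>j\<in>J. \<exists>L. \<forall>i\<in>I. \<forall>p\<in>A. \<forall>q\<in>A. \<bar>f j i p - f j i q\<bar> \<le> L * d p q"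
    using assms(2) unfolding bounded_lipschitz_family_def by blast
  then obtain Lj where Lj: "\<forall>j\<in>J. \<forall>i\<in>I. \<forall>p\<in>A. \<forall>q\<in>A. \<bar>f j i p - f j i q\<bar> \<le> Lj j * d p q"
    by (auto dest: bchoice)
  show ?thesis
  proof (rule that[of "\<Sum>j\<in>J. \<bar>Lj j\<bar>"])
    show "0 \<le> (\<Sum>j\<in>J. \<bar>Lj j\<bar>)"
      by (simp add: sum_nonneg)
    have "Lj j * d p q \<le> (\<Sum>j\<in>J. \<bar>Lj j\<bar>) * d p q" if "j \<in> J" for j p q
    proof (rule mult_right_mono[OF _ d_nonneg])
      have "\<bar>Lj j\<bar> \<le> (\<Sum>j\<in>J. \<bar>Lj j\<bar>)"
        using that \<open>finite J\<close> by (intro member_le_sum) auto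
      then show "Lj j \<le> (\<Sum>j\<in>J. \<bar>Lj j\<bar>)"
        by linarith
    qed
    then show "\<forall>j\<in>J. \<forall>i\<in>I. \<forall>p\<in>A. \<forall>q\<in>A. \<bar>f j i p - f j i q\<bar> \<le> (\<Sum>j\<in>J. \<bar>Lj j\<bar>) * d p q"
      using Lj by (meson order_trans)
  qed
qed

lemma sum_cross_terms_le:
  fixes \<delta> g :: "'i \<Rightarrow> real"
  assumes "finite I" "0 \<le> L" and g: "\<And>i. i \<in> I \<Longrightarrow> \<bar>g i\<bar> \<le> L * (e + (\<Sum>j\<in>I. \<bar>\<delta> j\<bar>))"
  shows "(\<Sum>i\<in>I. 2 * \<delta> i * g i) \<le> 3 * real (card I) * L * (\<Sum>i\<in>I. (\<delta> i)\<^sup>2) + L * e\<^sup>2"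
proof -
  define D where "D = (\<Sum>j\<in>I. \<bar>\<delta> j\<bar>)"
  have "(\<Sum>i\<in>I. 2 * \<delta> i * g i) \<le> (\<Sum>i\<in>I. 2 * \<bar>\<delta> i\<bar> * (L * (e + D)))"
  proof (rule sum_mono)
    fix i assume "i \<in> I"
    have "\<delta> i * g i \<le> \<bar>\<delta> i\<bar> * \<bar>g i\<bar>"
      by (metis abs_ge_self abs_mult)
    also have "\<dots> \<le> \<bar>\<delta> i\<bar> * (L * (e + D))"
      using g[OF \<open>i \<in> I\<close>] by (simp add: D_def mult_left_mono)
    finally show "2 * \<delta> i * g i \<le> 2 * \<bar>\<delta> i\<bar> * (L * (e + D))"
      by simp
  qed
  also have "\<dots> = D * (2 * L * (e + D))"
    unfolding D_def sum_distrib_right by (simp add: mult_ac)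
  also have "\<dots> = L * (2 * D * e) + 2 * L * D\<^sup>2"
    by (simp add: power2_eq_square algebra_simps)
  also have "\<dots> \<le> L * (D\<^sup>2 + e\<^sup>2) + 2 * L * D\<^sup>2"
    using sum_squares_bound[of D e] \<open>0 \<le> L\<close> by (simp add: mult_left_mono)
  also have "\<dots> = 3 * L * D\<^sup>2 + L * e\<^sup>2"
    by (simp add: algebra_simps)
  also have "\<dots> \<le> 3 * L * ((\<Sum>i\<in>I. (\<delta> i)\<^sup>2) * card I) + L * e\<^sup>2"
    using sum_squared_le_sum_of_squares[of "\<lambda>i. \<bar>\<delta> i\<bar>" I] \<open>0 \<le> L\<close>
    by (simp add: D_def mult_left_mono)
  finally show ?thesis
    by (simp add: algebra_simps)
qed

lemma clamp_real: "a \<le> b \<Longrightarrow> clamp a b (x :: real) = max a (min b x)"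
  unfolding clamp_def by (simp only: Basis_real_def) auto

section \<open>The compartmental vector field\<close>

text \<open>Indexing the seven components of a state by a finite type turns Ntot, sdist2 and the
  equations into sums and families over compartments, and identifies states with vectors in
  real ^ compartment.\<close>

datatype compartment = Susc | Efc | Epc | Ifc | Ipc | Hosp | Recov

lemma UNIV_compartment: "UNIV = {Susc, Efc, Epc, Ifc, Ipc, Hosp, Recov}"
  using compartment.exhaust by auto

instance compartment :: finite
  by standard (simp add: UNIV_compartment)

lemma sum_compartments:
  "(\<Sum>c\<in>UNIV. f c) = f Susc + f Efc + f Epc + f Ifc + f Ipc + f Hosp + f Recov"
  by (simp add: UNIV_compartment add.assoc)

lemma card_compartments: "CARD(compartment) = 7"
  by (simp add: UNIV_compartment)

lemma all_compartments: "(\<forall>c. Q c) \<longleftrightarrow> Q Susc \<and> Q Efc \<and> Q Epc \<and> Q Ifc \<and> Q Ipc \<and> Q Hosp \<and> Q Recov"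
  by (metis compartment.exhaust)

fun pop :: "state \<Rightarrow> compartment \<Rightarrow> real" where
  "pop y Susc = xS y"
| "pop y Efc = xEfc y"
| "pop y Epc = xEpc y"
| "pop y Ifc = xIfc y"
| "pop y Ipc = xIpc y"
| "pop y Hosp = xH y"
| "pop y Recov = xR y"

definition mk_state :: "(compartment \<Rightarrow> real) \<Rightarrow> state" where
  "mk_state f = \<lparr>xS = f Susc, xEfc = f Efc, xEpc = f Epc, xIfc = f Ifc, xIpc = f Ipc,
     xH = f Hosp, xR = f Recov\<rparr>"

lemma pop_mk_state [simp]: "pop (mk_state f) c = f c"
  by (cases c) (simp_all add: mk_state_def)

lemma state_eqI:
  assumes "\<And>c. pop y c = pop z c"
  shows "y = z"
  using assms[of Susc] assms[of Efc] assms[of Epc] assms[of Ifc] assms[of Ipc] assms[of Hosp]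
    assms[of Recov]
  by (intro state.equality) simp_all

lemma Ntot_eq_sum: "Ntot y = (\<Sum>c\<in>UNIV. pop y c)"
  by (simp add: Ntot_def sum_compartments)

lemma sdist2_eq_sum: "sdist2 y z = (\<Sum>c\<in>UNIV. (pop y c - pop z c)\<^sup>2)"
  by (simp add: sdist2_def sum_compartments)

definition l1_dist :: "state \<Rightarrow> state \<Rightarrow> real" where
  "l1_dist y z = (\<Sum>c\<in>UNIV. \<bar>pop y c - pop z c\<bar>)"

lemma l1_dist_nonneg: "0 \<le> l1_dist y z"
  by (simp add: l1_dist_def sum_nonneg)

lemma abs_pop_diff_le_l1_dist: "\<bar>pop y c - pop z c\<bar> \<le> l1_dist y z"
  unfolding l1_dist_def by (rule member_le_sum) auto

lemma abs_Ntot_diff_le_l1_dist: "\<bar>Ntot y - Ntot z\<bar> \<le> l1_dist y z"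
  unfolding Ntot_eq_sum l1_dist_def sum_subtractf[symmetric] by (rule sum_abs)

lemma l1_dist_squared_le: "(l1_dist y z)\<^sup>2 \<le> 7 * sdist2 y z"
  using sum_squared_le_sum_of_squares[of "\<lambda>c. \<bar>pop y c - pop z c\<bar>" UNIV]
  by (simp add: l1_dist_def sdist2_eq_sum card_compartments mult.commute)

definition input :: "params \<Rightarrow> compartment \<Rightarrow> real \<Rightarrow> real" where
  "input P c = (case c of Susc \<Rightarrow> pS P | Efc \<Rightarrow> pEfc P | Epc \<Rightarrow> pEpc P | Ifc \<Rightarrow> pIfc P
     | Ipc \<Rightarrow> pIpc P | Hosp \<Rightarrow> pH P | Recov \<Rightarrow> pR P)"

fun rhs :: "params \<Rightarrow> (real \<Rightarrow> real) \<Rightarrow> real \<Rightarrow> real \<Rightarrow> state \<Rightarrow> compartment \<Rightarrow> real" where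
  "rhs P \<theta> t b y Susc = input P Susc t - Gam P b y * xS y - mu P * xS y"
| "rhs P \<theta> t b y Efc = input P Efc t + \<theta> t * Gam P b y * xS y
     - (gfc P + gplus P + sigE P + mu P - gamE P / Ntot y * xEpc y) * xEfc y"
| "rhs P \<theta> t b y Epc = input P Epc t + (1 - \<theta> t) * Gam P b y * xS y
     - (gpc P + gminus P + sigE P + mu P + gamE P / Ntot y * xEfc y) * xEpc y"
| "rhs P \<theta> t b y Ifc = input P Ifc t + gfc P * xEfc y + gminus P * xEpc y
     - (delta P + sigI P + dI P + mu P - gamI P / Ntot y * xIpc y) * xIfc y"
| "rhs P \<theta> t b y Ipc = input P Ipc t + gpc P * xEpc y + gplus P * xEfc y
     - (delta P + sigI P + dI P + mu P + gamI P / Ntot y * xIfc y) * xIpc y"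
| "rhs P \<theta> t b y Hosp = input P Hosp t + delta P * (xIfc y + xIpc y) - (sigH P + dH P + mu P) * xH y"
| "rhs P \<theta> t b y Recov = input P Recov t + sigE P * (xEfc y + xEpc y) + sigI P * (xIfc y + xIpc y)
     + sigH P * xH y - mu P * xR y"

lemma is_solution_iff:
  "is_solution P T \<theta> \<beta> x0 x \<longleftrightarrow> x 0 = x0 \<and>
    (\<forall>t\<in>{0..T}. \<forall>c. ((\<lambda>s. pop (x s) c) has_real_derivative rhs P \<theta> t (\<beta> t) (x t) c)
       (at t within {0..T}))"
  unfolding is_solution_def Let_def all_compartments by (simp add: input_def)

lemma sum_rhs:
  "(\<Sum>c\<in>UNIV. rhs P \<theta> t b y c)
     = (\<Sum>c\<in>UNIV. input P c t) - mu P * Ntot y - dI P * (xIfc y + xIpc y) - dH P * xH y"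
  by (simp add: sum_compartments Ntot_def algebra_simps)

lemma admissible_params_pos:
  assumes "admissible_params P"
  shows "0 < mu P" "0 < eEfc P" "0 < eEpc P" "0 < eIfc P" "0 < eIpc P" "0 < eH P"
    "0 < gfc P" "0 < gpc P" "0 < gplus P" "0 < gminus P" "0 < delta P" "0 < dI P" "0 < dH P"
    "0 < sigE P" "0 < sigI P" "0 < sigH P"
  using assms by (simp_all add: admissible_params_def)

lemma admissible_input:
  assumes "admissible_params P"
  shows "bounded (range (input P c))" "0 \<le> input P c t" "continuous_on S (input P c)"
proof -
  have "input P c \<in> {pS P, pEfc P, pEpc P, pIfc P, pIpc P, pH P, pR P}"
    by (cases c) (simp_all add: input_def)
  then have p: "bounded (range (input P c)) \<and> (\<forall>t. 0 \<le> input P c t) \<and> smooth_fun (input P c)"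
    using assms unfolding admissible_params_def by blast
  then show "bounded (range (input P c))" "0 \<le> input P c t"
    by simp_all
  have "input P c differentiable (at t)" for t
    using p unfolding smooth_fun_def by (metis funpow_0)
  then show "continuous_on S (input P c)"
    by (simp add: continuous_at_imp_continuous_on differentiable_imp_continuous_within)
qed

definition nonneg_state :: "state \<Rightarrow> bool" where
  "nonneg_state y \<longleftrightarrow> (\<forall>c. 0 \<le> pop y c)"

lemma nonneg_stateD:
  "nonneg_state y \<Longrightarrow> 0 \<le> xS y \<and> 0 \<le> xEfc y \<and> 0 \<le> xEpc y \<and> 0 \<le> xIfc y \<and> 0 \<le> xIpc y
     \<and> 0 \<le> xH y \<and> 0 \<le> xR y"
  unfolding nonneg_state_def all_compartments by simp

definition infectivity_sum :: "params \<Rightarrow> real" where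
  "infectivity_sum P = eEfc P + eEpc P + eIfc P + eIpc P + eH P"

lemma Gam_bounds:
  assumes P: "admissible_params P" and b: "0 \<le> b" "b \<le> 1" and y: "nonneg_state y" "0 < Ntot y"
  shows "0 \<le> Gam P b y" "Gam P b y \<le> infectivity_sum P"
proof -
  define Q where "Q = eEfc P * xEfc y + eEpc P * xEpc y + eIfc P * xIfc y + eIpc P * xIpc y + eH P * xH y"
  note pos = admissible_params_pos[OF P] and nn = nonneg_stateD[OF y(1)]
  have "0 \<le> Q"
    unfolding Q_def using pos nn by (intro add_nonneg_nonneg mult_nonneg_nonneg) auto
  then show "0 \<le> Gam P b y"
    using b y by (simp add: Gam_def Q_def)
  have "Q \<le> infectivity_sum P * (xEfc y + xEpc y + xIfc y + xIpc y + xH y)"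
    unfolding Q_def infectivity_sum_def using pos nn
    by (simp add: algebra_simps add_mono mult_right_mono add_increasing add_increasing2)
  also have "\<dots> \<le> infectivity_sum P * Ntot y"
    unfolding Ntot_def infectivity_sum_def using pos nn by (intro mult_left_mono) auto
  finally have "Q / Ntot y \<le> infectivity_sum P"
    using y by (simp add: pos_divide_le_eq)
  moreover have "Gam P b y = b * (Q / Ntot y)"
    by (simp add: Gam_def Q_def)
  moreover have "b * (Q / Ntot y) \<le> Q / Ntot y"
    using b y \<open>0 \<le> Q\<close> by (intro mult_left_le_one_le) auto
  ultimately show "Gam P b y \<le> infectivity_sum P"
    by linarith
qed

lemma rhs_Susc_ge:
  assumes "admissible_params P" "0 \<le> b" "b \<le> 1" "nonneg_state y" "0 < Ntot y"
  shows "- (infectivity_sum P + mu P) * xS y \<le> rhs P \<theta> t b y Susc"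
proof -
  have "Gam P b y * xS y \<le> infectivity_sum P * xS y"
    using Gam_bounds[OF assms] nonneg_stateD[OF assms(4)] by (intro mult_right_mono) auto
  moreover have "0 \<le> input P Susc t"
    by (rule admissible_input(2)[OF assms(1)])
  ultimately show ?thesis
    by (simp add: algebra_simps)
qed

lemma rhs_nonneg_if_empty:
  assumes P: "admissible_params P" and "0 \<le> b" "b \<le> 1" "0 \<le> \<theta> t" "\<theta> t \<le> 1"
    and y: "nonneg_state y" "0 < Ntot y" and "c \<noteq> Susc" "pop y c = 0"
  shows "0 \<le> rhs P \<theta> t b y c"
proof -
  have "0 \<le> Gam P b y"
    using Gam_bounds[OF P] assms by blast
  then show ?thesis
    using assms admissible_params_pos[OF P] admissible_input(2)[OF P, of c t] nonneg_stateD[OF y(1)]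
    by (cases c) (auto intro!: add_nonneg_nonneg mult_nonneg_nonneg)
qed

lemma continuous_on_rhs:
  assumes P: "admissible_params P" and "continuous_on S \<theta>" "continuous_on S \<beta>"
    and y: "\<And>c. continuous_on S (\<lambda>t. pop (y t) c)" and N: "\<And>t. t \<in> S \<Longrightarrow> Ntot (y t) \<noteq> 0"
  shows "continuous_on S (\<lambda>t. rhs P \<theta> t (\<beta> t) (y t) c)"
proof -
  have comps: "continuous_on S (\<lambda>t. xS (y t))" "continuous_on S (\<lambda>t. xEfc (y t))"
    "continuous_on S (\<lambda>t. xEpc (y t))" "continuous_on S (\<lambda>t. xIfc (y t))"
    "continuous_on S (\<lambda>t. xIpc (y t))" "continuous_on S (\<lambda>t. xH (y t))" "continuous_on S (\<lambda>t. xR (y t))"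
    using y[of Susc] y[of Efc] y[of Epc] y[of Ifc] y[of Ipc] y[of Hosp] y[of Recov] by simp_all
  moreover have "continuous_on S (\<lambda>t. Ntot (y t))"
    unfolding Ntot_def using comps by (intro continuous_intros)
  moreover note admissible_input(3)[OF P] assms(2,3)
  ultimately show ?thesis
    using N by (cases c) (auto simp: Gam_def intro!: continuous_intros)
qed

definition region :: "real \<Rightarrow> real \<Rightarrow> state set" where
  "region m K = {y. (\<forall>c. \<bar>pop y c\<bar> \<le> K) \<and> m \<le> Ntot y}"

lemma region_l1_neighbourhood:
  assumes "y \<in> region m K" "l1_dist y z \<le> e"
  shows "z \<in> region (m - e) (K + e)"
proof -
  have "\<bar>pop z c\<bar> \<le> K + e" for c
  proof -
    have "\<bar>pop y c\<bar> \<le> K"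
      using assms(1) by (simp add: region_def)
    then show ?thesis
      using assms(2) abs_pop_diff_le_l1_dist[of y c z] by arith
  qed
  moreover have "m - e \<le> Ntot z"
    using assms abs_Ntot_diff_le_l1_dist[of y z] by (auto simp: region_def)
  ultimately show ?thesis
    by (simp add: region_def)
qed

lemma abs_Ntot_le_in_region:
  assumes "y \<in> region m K"
  shows "\<bar>Ntot y\<bar> \<le> 7 * K"
proof -
  have "\<bar>Ntot y\<bar> \<le> (\<Sum>c\<in>UNIV. \<bar>pop y c\<bar>)"
    unfolding Ntot_eq_sum by (rule sum_abs)
  also have "\<dots> \<le> of_nat CARD(compartment) * K"
    using assms by (intro sum_bounded_above) (simp add: region_def)
  finally show ?thesis
    by (simp add: card_compartments)
qed

definition rate_state_dist :: "real \<times> state \<Rightarrow> real \<times> state \<Rightarrow> real" where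
  "rate_state_dist p q = \<bar>fst p - fst q\<bar> + l1_dist (snd p) (snd q)"

lemma rhs_bounded_lipschitz_family:
  assumes P: "admissible_params P" and \<theta>: "\<And>t. t \<in> {0..T} \<Longrightarrow> \<bar>\<theta> t\<bar> \<le> 1" and "0 < m"
  shows "bounded_lipschitz_family rate_state_dist {0..T} ({0..1} \<times> region m K)
    (\<lambda>t p. rhs P \<theta> t (fst p) (snd p) c)"
proof -
  let ?family = "bounded_lipschitz_family rate_state_dist {0..T} ({0..1} \<times> region m K)"
  have pop: "?family (\<lambda>t p. pop (snd p) c)" for c
    by (rule bounded_lipschitz_family_point[where B = K and L = 1])
      (auto simp: region_def rate_state_dist_def intro: order_trans[OF abs_pop_diff_le_l1_dist])
  have fst: "?family (\<lambda>t p. fst p)"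
    by (rule bounded_lipschitz_family_point[where B = 1 and L = 1])
      (auto simp: rate_state_dist_def l1_dist_nonneg)
  have Ntot: "?family (\<lambda>t p. Ntot (snd p))"
    by (rule bounded_lipschitz_family_point[where B = "7 * K" and L = 1])
      (auto simp: rate_state_dist_def abs_Ntot_le_in_region intro: order_trans[OF abs_Ntot_diff_le_l1_dist])
  have divide_Ntot: "?family (\<lambda>t p. f t p / Ntot (snd p))" if "?family f" for f
    using that Ntot \<open>0 < m\<close> by (rule bounded_lipschitz_family_divide) (auto simp: region_def)
  have "bounded (input P c ` {0..T})" for c
    by (rule bounded_subset[OF admissible_input(1)[OF P]]) auto
  moreover have "bounded (\<theta> ` {0..T})"
    using \<theta> by (auto simp: bounded_iff intro!: exI[of _ 1])
  ultimately have index: "?family (\<lambda>t p. input P c t)" "?family (\<lambda>t p. \<theta> t)" for c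
    by (simp_all add: bounded_lipschitz_family_index)
  note comps = pop[of Susc, simplified] pop[of Efc, simplified] pop[of Epc, simplified]
    pop[of Ifc, simplified] pop[of Ipc, simplified] pop[of Hosp, simplified] pop[of Recov, simplified]
  show ?thesis
    by (cases c; simp only: rhs.simps Gam_def;
        intro bounded_lipschitz_family_add bounded_lipschitz_family_diff bounded_lipschitz_family_mult
          divide_Ntot index fst comps bounded_lipschitz_family_const)
qed

lemma rhs_lipschitz_on_region:
  assumes P: "admissible_params P" and \<theta>: "\<And>t. t \<in> {0..T} \<Longrightarrow> \<bar>\<theta> t\<bar> \<le> 1" and "0 < m"
  obtains L where "0 \<le> L"
    "\<And>t b b' y y' c. t \<in> {0..T} \<Longrightarrow> b \<in> {0..1} \<Longrightarrow> b' \<in> {0..1} \<Longrightarrow>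
       y \<in> region m K \<Longrightarrow> y' \<in> region m K \<Longrightarrow>
       \<bar>rhs P \<theta> t b y c - rhs P \<theta> t b' y' c\<bar> \<le> L * (\<bar>b - b'\<bar> + l1_dist y y')"
proof -
  obtain L where "0 \<le> L" and L: "\<forall>c\<in>UNIV. \<forall>t\<in>{0..T}. \<forall>p\<in>{0..1} \<times> region m K. \<forall>q\<in>{0..1} \<times> region m K.
      \<bar>rhs P \<theta> t (fst p) (snd p) c - rhs P \<theta> t (fst q) (snd q) c\<bar> \<le> L * rate_state_dist p q"
    using bounded_lipschitz_family_uniform[where f = "\<lambda>c t p. rhs P \<theta> t (fst p) (snd p) c",
        OF finite_class.finite_UNIV
          rhs_bounded_lipschitz_family[where T = T and \<theta> = \<theta> and K = K, OF P \<theta> \<open>0 < m\<close>]]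
    by (auto simp: rate_state_dist_def l1_dist_nonneg)
  show ?thesis
  proof (rule that[OF \<open>0 \<le> L\<close>])
    fix t b b' :: real and y y' c
    assume "t \<in> {0..T}" "b \<in> {0..1}" "b' \<in> {0..1}" "y \<in> region m K" "y' \<in> region m K"
    then show "\<bar>rhs P \<theta> t b y c - rhs P \<theta> t b' y' c\<bar> \<le> L * (\<bar>b - b'\<bar> + l1_dist y y')"
      using L by (force simp: rate_state_dist_def)
  qed
qed

lemma sdist2_nonneg: "0 \<le> sdist2 y z"
  by (simp add: sdist2_def)

lemma sdist2_eq_0_iff: "sdist2 y z = 0 \<longleftrightarrow> y = z"
  by (auto simp: sdist2_eq_sum sum_nonneg_eq_0_iff intro: state_eqI)

lemma region_mono:
  assumes "m' \<le> m" "K \<le> K'"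
  shows "region m K \<subseteq> region m' K'"
proof
  fix y assume "y \<in> region m K"
  then have "\<bar>pop y c\<bar> \<le> K" "m \<le> Ntot y" for c
    by (simp_all add: region_def)
  then show "y \<in> region m' K'"
    using assms by (simp add: region_def) (meson order_trans)
qed

lemma pop_le_Ntot: "nonneg_state y \<Longrightarrow> pop y c \<le> Ntot y"
  unfolding Ntot_eq_sum by (rule member_le_sum) (auto simp: nonneg_state_def)

lemma sdist2_has_real_derivative:
  assumes "\<And>c. ((\<lambda>s. pop (x s) c) has_real_derivative X c) (at t within S)"
    and "\<And>c. ((\<lambda>s. pop (z s) c) has_real_derivative Z c) (at t within S)"
  shows "((\<lambda>s. sdist2 (x s) (z s)) has_real_derivative
      (\<Sum>c\<in>UNIV. 2 * (pop (x t) c - pop (z t) c) * (X c - Z c))) (at t within S)"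
  unfolding sdist2_eq_sum
  by (rule DERIV_sum, rule DERIV_cong[OF DERIV_power[OF DERIV_diff[OF assms]]]) simp

lemma rhs_energy_estimate:
  assumes P: "admissible_params P" and \<theta>: "\<And>t. t \<in> {0..T} \<Longrightarrow> \<bar>\<theta> t\<bar> \<le> 1" and "0 < m"
  obtains L where "0 \<le> L"
    "\<And>t b b' y y'. t \<in> {0..T} \<Longrightarrow> b \<in> {0..1} \<Longrightarrow> b' \<in> {0..1} \<Longrightarrow>
       y \<in> region m K \<Longrightarrow> y' \<in> region m K \<Longrightarrow>
       (\<Sum>c\<in>UNIV. 2 * (pop y c - pop y' c) * (rhs P \<theta> t b y c - rhs P \<theta> t b' y' c))
         \<le> 21 * L * sdist2 y y' + L * (b - b')\<^sup>2"
proof -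
  obtain L where "0 \<le> L" and L:
    "\<And>t b b' y y' c. t \<in> {0..T} \<Longrightarrow> b \<in> {0..1} \<Longrightarrow> b' \<in> {0..1} \<Longrightarrow>
       y \<in> region m K \<Longrightarrow> y' \<in> region m K \<Longrightarrow>
       \<bar>rhs P \<theta> t b y c - rhs P \<theta> t b' y' c\<bar> \<le> L * (\<bar>b - b'\<bar> + l1_dist y y')"
    using rhs_lipschitz_on_region[where T = T and \<theta> = \<theta> and K = K, OF P \<theta> \<open>0 < m\<close>] by blast
  show ?thesis
  proof (rule that[OF \<open>0 \<le> L\<close>])
    fix t b b' :: real and y y'
    assume "t \<in> {0..T}" "b \<in> {0..1}" "b' \<in> {0..1}" "y \<in> region m K" "y' \<in> region m K"
    then show "(\<Sum>c\<in>UNIV. 2 * (pop y c - pop y' c) * (rhs P \<theta> t b y c - rhs P \<theta> t b' y' c))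
         \<le> 21 * L * sdist2 y y' + L * (b - b')\<^sup>2"
      using sum_cross_terms_le[of UNIV L "\<lambda>c. rhs P \<theta> t b y c - rhs P \<theta> t b' y' c" "\<bar>b - b'\<bar>"
          "\<lambda>c. pop y c - pop y' c"] L \<open>0 \<le> L\<close>
      by (simp add: l1_dist_def sdist2_eq_sum card_compartments)
  qed
qed

lemma l1_dist_mk_state_le: "l1_dist (mk_state (vec_nth v)) (mk_state (vec_nth w)) \<le> 7 * norm (v - w)"
proof -
  have "l1_dist (mk_state (vec_nth v)) (mk_state (vec_nth w)) = (\<Sum>c\<in>UNIV. \<bar>(v - w) $ c\<bar>)"
    by (simp add: l1_dist_def)
  also have "\<dots> \<le> of_nat CARD(compartment) * norm (v - w)"
    by (intro sum_bounded_above component_le_norm_cart)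
  finally show ?thesis
    by (simp add: card_compartments)
qed

section \<open>Well-posedness and stability\<close>

locale epidemic_ivp =
  fixes P :: params and T \<beta>lo \<beta>hi :: real and \<theta> :: "real \<Rightarrow> real" and x0 :: state
  assumes P: "admissible_params P"
    and \<beta>lo: "0 < \<beta>lo" and \<beta>hi: "\<beta>hi \<le> 1"
    and T: "0 < T"
    and \<theta>_cont: "continuous_on {0..T} \<theta>" and \<theta>_bounds: "\<And>t. t \<in> {0..T} \<Longrightarrow> 0 \<le> \<theta> t \<and> \<theta> t \<le> 1"
    and S0: "0 < xS x0" and x0_nonneg: "nonneg_state x0"
begin

definition admissible_beta :: "(real \<Rightarrow> real) \<Rightarrow> bool" where
  "admissible_beta \<beta> \<longleftrightarrow> continuous_on {0..T} \<beta> \<and> (\<forall>t\<in>{0..T}. \<beta>lo \<le> \<beta> t \<and> \<beta> t \<le> \<beta>hi)"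

lemma admissible_beta_in_unit:
  assumes "admissible_beta \<beta>" "t \<in> {0..T}"
  shows "\<beta> t \<in> {0..1}"
proof -
  have "\<beta>lo \<le> \<beta> t" "\<beta> t \<le> \<beta>hi"
    using assms by (simp_all add: admissible_beta_def)
  then show ?thesis
    using \<beta>lo \<beta>hi by simp
qed

lemma abs_theta_le_1: "t \<in> {0..T} \<Longrightarrow> \<bar>\<theta> t\<bar> \<le> 1"
  using \<theta>_bounds by fastforce

definition S_min :: real where
  "S_min = xS x0 * exp (- ((infectivity_sum P + mu P) * T))"

definition N_max :: real where
  "N_max = max (Ntot x0) ((SUP t. \<Sum>c\<in>UNIV. input P c t) / mu P)"

definition feasible :: "state \<Rightarrow> bool" where
  "feasible y \<longleftrightarrow> S_min \<le> xS y \<and> nonneg_state y \<and> Ntot y \<le> N_max"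

definition lower_bound :: "compartment \<Rightarrow> real" where
  "lower_bound c = (if c = Susc then S_min else 0)"

definition clamp_state :: "state \<Rightarrow> state" where
  "clamp_state y = mk_state (\<lambda>c. clamp (lower_bound c) N_max (pop y c))"

definition working_region :: "state set" where
  "working_region = region (S_min / 2) (N_max + 1)"

lemma infectivity_sum_pos: "0 < infectivity_sum P"
  using admissible_params_pos[OF P] by (simp add: infectivity_sum_def)

lemma S_min_pos: "0 < S_min"
  using S0 by (simp add: S_min_def)

lemma S_min_le_S_decay: "t \<le> T \<Longrightarrow> S_min \<le> xS x0 * exp (- ((infectivity_sum P + mu P) * t))"
  using S0 infectivity_sum_pos admissible_params_pos(1)[OF P]
  by (simp add: S_min_def mult_left_mono)

lemma Ntot_x0_le_N_max: "Ntot x0 \<le> N_max"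
  by (simp add: N_max_def)

lemma total_input_le: "(\<Sum>c\<in>UNIV. input P c t) \<le> mu P * N_max"
proof -
  have "\<forall>c. \<exists>B. \<forall>t. \<bar>input P c t\<bar> \<le> B"
    using admissible_input(1)[OF P] by (auto simp: bounded_iff)
  then obtain B where B: "\<forall>c t. \<bar>input P c t\<bar> \<le> B c"
    by (auto dest: choice)
  have "bdd_above (range (\<lambda>t. \<Sum>c\<in>UNIV. input P c t))"
    by (rule bdd_aboveI2[of _ _ "\<Sum>c\<in>UNIV. B c"], rule sum_mono) (use B abs_le_D1 in blast)
  then have "(\<Sum>c\<in>UNIV. input P c t) \<le> (SUP t. \<Sum>c\<in>UNIV. input P c t)"
    by (rule cSUP_upper[OF UNIV_I])
  also have "\<dots> \<le> mu P * N_max"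
  proof -
    have "(SUP t. \<Sum>c\<in>UNIV. input P c t) / mu P \<le> N_max"
      by (simp add: N_max_def)
    then show ?thesis
      using admissible_params_pos(1)[OF P] by (simp add: pos_divide_le_eq mult.commute)
  qed
  finally show ?thesis .
qed

lemma S_min_le_N_max: "S_min \<le> N_max"
proof -
  have "S_min \<le> xS x0"
    using S_min_le_S_decay[of 0] T by simp
  also have "\<dots> \<le> Ntot x0"
    using nonneg_stateD[OF x0_nonneg] by (simp add: Ntot_def)
  finally show ?thesis
    using Ntot_x0_le_N_max by linarith
qed

lemma lower_bound_le_N_max: "lower_bound c \<le> N_max"
  using S_min_le_N_max S_min_pos by (simp add: lower_bound_def)

lemma lower_bound_nonneg: "0 \<le> lower_bound c"
  using S_min_pos by (simp add: lower_bound_def)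

lemma pop_clamp_state: "pop (clamp_state y) c = max (lower_bound c) (min N_max (pop y c))"
  by (simp add: clamp_state_def clamp_real lower_bound_le_N_max)

lemma clamp_state_bounds: "lower_bound c \<le> pop (clamp_state y) c" "pop (clamp_state y) c \<le> N_max"
  using lower_bound_le_N_max[of c] by (auto simp: pop_clamp_state)

lemma nonneg_clamp_state: "nonneg_state (clamp_state y)"
  unfolding nonneg_state_def using clamp_state_bounds(1) lower_bound_nonneg order_trans by blast

lemma S_min_le_Ntot_clamp_state: "S_min \<le> Ntot (clamp_state y)"
proof -
  have "S_min \<le> pop (clamp_state y) Susc"
    using clamp_state_bounds(1)[of Susc] by (simp add: lower_bound_def)
  also have "\<dots> \<le> Ntot (clamp_state y)"
    by (rule pop_le_Ntot[OF nonneg_clamp_state])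
  finally show ?thesis .
qed

lemma N_max_le_Ntot_clamp_state:
  assumes "\<And>c. lower_bound c \<le> pop y c" "N_max \<le> Ntot y"
  shows "N_max \<le> Ntot (clamp_state y)"
proof (cases "\<exists>c. N_max < pop y c")
  case True
  then obtain c where "N_max < pop y c" ..
  then have "N_max = pop (clamp_state y) c"
    using lower_bound_le_N_max[of c] by (simp add: pop_clamp_state)
  also have "\<dots> \<le> Ntot (clamp_state y)"
    by (rule pop_le_Ntot[OF nonneg_clamp_state])
  finally show ?thesis .
next
  case False
  then have "clamp_state y = y"
    using assms(1) by (intro state_eqI) (simp add: pop_clamp_state not_less)
  then show ?thesis
    using assms(2) by simp
qed

lemma feasible_bounds:
  assumes "feasible y"
  shows "lower_bound c \<le> pop y c" "pop y c \<le> N_max"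
  using assms pop_le_Ntot[of y c] by (auto simp: feasible_def lower_bound_def nonneg_state_def)

lemma clamp_state_feasible: "feasible y \<Longrightarrow> clamp_state y = y"
  by (rule state_eqI) (simp add: pop_clamp_state feasible_bounds)

lemma clamp_state_in_working_region: "clamp_state y \<in> working_region"
proof -
  have "\<bar>pop (clamp_state y) c\<bar> \<le> N_max + 1" for c
    using clamp_state_bounds[where c = c and y = y] lower_bound_nonneg[of c] by simp
  then show ?thesis
    using S_min_le_Ntot_clamp_state[of y] S_min_pos by (simp add: working_region_def region_def)
qed

lemma feasible_in_working_region: "feasible y \<Longrightarrow> y \<in> working_region"
  using clamp_state_in_working_region clamp_state_feasible by metis

lemma l1_dist_clamp_state_le: "l1_dist (clamp_state y) (clamp_state z) \<le> l1_dist y z"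
  unfolding l1_dist_def clamp_state_def pop_mk_state
  by (intro sum_mono) (metis dist_clamps_le_dist_args dist_real_def)

definition near_radius :: real where
  "near_radius = (min 1 (S_min / 2))\<^sup>2 / 7"

lemma near_radius_pos: "0 < near_radius"
  using S_min_pos by (simp add: near_radius_def)

lemma near_feasible_in_working_region:
  assumes "feasible y" "sdist2 y z < near_radius"
  shows "z \<in> working_region"
proof -
  define e where "e = min 1 (S_min / 2)"
  have "0 < e"
    using S_min_pos by (simp add: e_def)
  have "(l1_dist y z)\<^sup>2 < e\<^sup>2"
    using l1_dist_squared_le[of y z] assms(2) by (simp add: near_radius_def e_def)
  then have "l1_dist y z \<le> e"
    using \<open>0 < e\<close> by (simp add: power2_less_imp_less less_imp_le)
  moreover have "y \<in> region S_min N_max"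
  proof -
    have "\<bar>pop y c\<bar> \<le> N_max" for c
      using feasible_bounds[OF assms(1), of c] lower_bound_nonneg[of c] by simp
    moreover have "S_min \<le> Ntot y"
      using assms(1) pop_le_Ntot[of y Susc] by (simp add: feasible_def)
    ultimately show ?thesis
      by (simp add: region_def)
  qed
  ultimately have "z \<in> region (S_min - e) (N_max + e)"
    by (rule region_l1_neighbourhood[rotated])
  also have "\<dots> \<subseteq> working_region"
    unfolding working_region_def by (rule region_mono) (auto simp: e_def)
  finally show ?thesis .
qed

lemma working_region_lipschitz:
  obtains L where "0 \<le> L"
    "\<And>t b b' y y' c. t \<in> {0..T} \<Longrightarrow> b \<in> {0..1} \<Longrightarrow> b' \<in> {0..1} \<Longrightarrow>
       y \<in> working_region \<Longrightarrow> y' \<in> working_region \<Longrightarrow>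
       \<bar>rhs P \<theta> t b y c - rhs P \<theta> t b' y' c\<bar> \<le> L * (\<bar>b - b'\<bar> + l1_dist y y')"
  using rhs_lipschitz_on_region[where T = T and \<theta> = \<theta> and K = "N_max + 1",
      OF P abs_theta_le_1 half_gt_zero[OF S_min_pos]]
  unfolding working_region_def by blast

definition energy_bound :: "real \<Rightarrow> bool" where
  "energy_bound L \<longleftrightarrow> 0 \<le> L \<and>
     (\<forall>t\<in>{0..T}. \<forall>b\<in>{0..1}. \<forall>b'\<in>{0..1}. \<forall>y\<in>working_region. \<forall>y'\<in>working_region.
        (\<Sum>c\<in>UNIV. 2 * (pop y c - pop y' c) * (rhs P \<theta> t b y c - rhs P \<theta> t b' y' c))
          \<le> 21 * L * sdist2 y y' + L * (b - b')\<^sup>2)"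

lemma energy_bound_exists: "\<exists>L. energy_bound L"
proof -
  obtain L where "0 \<le> L" and L:
    "\<And>t b b' y y'. t \<in> {0..T} \<Longrightarrow> b \<in> {0..1} \<Longrightarrow> b' \<in> {0..1} \<Longrightarrow>
       y \<in> working_region \<Longrightarrow> y' \<in> working_region \<Longrightarrow>
       (\<Sum>c\<in>UNIV. 2 * (pop y c - pop y' c) * (rhs P \<theta> t b y c - rhs P \<theta> t b' y' c))
         \<le> 21 * L * sdist2 y y' + L * (b - b')\<^sup>2"
    using rhs_energy_estimate[where T = T and \<theta> = \<theta> and K = "N_max + 1",
        OF P abs_theta_le_1 half_gt_zero[OF S_min_pos]]
    unfolding working_region_def by blast
  then have "energy_bound L"
    by (simp add: energy_bound_def)
  then show ?thesis ..
qed

lemma energy_boundD: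
  assumes "energy_bound L" "t \<in> {0..T}" "b \<in> {0..1}" "b' \<in> {0..1}"
    "y \<in> working_region" "y' \<in> working_region"
  shows "(\<Sum>c\<in>UNIV. 2 * (pop y c - pop y' c) * (rhs P \<theta> t b y c - rhs P \<theta> t b' y' c))
    \<le> 21 * L * sdist2 y y' + L * (b - b')\<^sup>2"
  using assms unfolding energy_bound_def by blast

end

context epidemic_ivp
begin

lemma Ntot_clamp_state_pos: "0 < Ntot (clamp_state y)"
  using S_min_le_Ntot_clamp_state S_min_pos by (rule less_le_trans[rotated])

definition clamped_field :: "(real \<Rightarrow> real) \<Rightarrow> real \<Rightarrow> real ^ compartment \<Rightarrow> real ^ compartment" where
  "clamped_field \<beta> t v = (\<chi> c. rhs P \<theta> t (\<beta> t) (clamp_state (mk_state (vec_nth v))) c)"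

lemma clamped_field_lipschitz:
  assumes \<beta>: "admissible_beta \<beta>"
  obtains L where "0 \<le> L"
    "\<And>t v w. t \<in> {0..T} \<Longrightarrow> norm (clamped_field \<beta> t v - clamped_field \<beta> t w) \<le> L * norm (v - w)"
proof -
  obtain L where "0 \<le> L" and L:
    "\<And>t b b' y y' c. t \<in> {0..T} \<Longrightarrow> b \<in> {0..1} \<Longrightarrow> b' \<in> {0..1} \<Longrightarrow>
       y \<in> working_region \<Longrightarrow> y' \<in> working_region \<Longrightarrow>
       \<bar>rhs P \<theta> t b y c - rhs P \<theta> t b' y' c\<bar> \<le> L * (\<bar>b - b'\<bar> + l1_dist y y')"
    using working_region_lipschitz by blast
  show ?thesis
  proof (rule that[of "49 * L"])
    show "0 \<le> 49 * L"
      using \<open>0 \<le> L\<close> by simp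
    fix t v w assume t: "t \<in> {0..T}"
    let ?y = "clamp_state (mk_state (vec_nth v))" and ?w = "clamp_state (mk_state (vec_nth w))"
    have "\<bar>(clamped_field \<beta> t v - clamped_field \<beta> t w) $ c\<bar> \<le> 7 * L * norm (v - w)" for c
    proof -
      have "\<bar>(clamped_field \<beta> t v - clamped_field \<beta> t w) $ c\<bar> \<le> L * (\<bar>\<beta> t - \<beta> t\<bar> + l1_dist ?y ?w)"
        unfolding clamped_field_def vector_minus_component vec_lambda_beta
        by (intro L t admissible_beta_in_unit[OF \<beta> t] clamp_state_in_working_region)
      also have "\<dots> \<le> L * (7 * norm (v - w))"
        using order_trans[OF l1_dist_clamp_state_le l1_dist_mk_state_le] \<open>0 \<le> L\<close>
        by (simp add: mult_left_mono)
      finally show ?thesis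
        by simp
    qed
    then have "norm (clamped_field \<beta> t v - clamped_field \<beta> t w)
        \<le> of_nat CARD(compartment) * (7 * L * norm (v - w))"
      by (intro order_trans[OF norm_le_l1_cart sum_bounded_above])
    then show "norm (clamped_field \<beta> t v - clamped_field \<beta> t w) \<le> 49 * L * norm (v - w)"
      by (simp add: card_compartments)
  qed
qed

lemma continuous_on_clamped_field:
  assumes \<beta>: "admissible_beta \<beta>" and v: "continuous_on {0..T} v"
  shows "continuous_on {0..T} (\<lambda>t. clamped_field \<beta> t (v t))"
  unfolding clamped_field_def
proof (intro continuous_on_vec_lambda continuous_on_rhs[OF P \<theta>_cont])
  show "continuous_on {0..T} \<beta>"
    using \<beta> by (simp add: admissible_beta_def)
  show "continuous_on {0..T} (\<lambda>t. pop (clamp_state (mk_state (vec_nth (v t)))) c)" for c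
    unfolding pop_clamp_state pop_mk_state by (intro continuous_intros v)
  show "Ntot (clamp_state (mk_state (vec_nth (v t)))) \<noteq> 0" for t
    using Ntot_clamp_state_pos by (simp add: less_imp_neq[symmetric])
qed

lemma clamped_solution_exists:
  assumes \<beta>: "admissible_beta \<beta>"
  obtains x where "x 0 = x0"
    "\<And>t c. t \<in> {0..T} \<Longrightarrow>
       ((\<lambda>s. pop (x s) c) has_real_derivative rhs P \<theta> t (\<beta> t) (clamp_state (x t)) c) (at t within {0..T})"
proof -
  obtain L where "0 \<le> L"
    and "\<And>t v w. t \<in> {0..T} \<Longrightarrow> norm (clamped_field \<beta> t v - clamped_field \<beta> t w) \<le> L * norm (v - w)"
    using clamped_field_lipschitz[OF \<beta>] by blast
  then interpret lipschitz_ode "clamped_field \<beta>" T L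
    using T continuous_on_clamped_field[OF \<beta>] by unfold_locales auto
  obtain v where v0: "v 0 = (\<chi> c. pop x0 c)"
    and v': "\<And>t. t \<in> {0..T} \<Longrightarrow> (v has_vector_derivative clamped_field \<beta> t (v t)) (at t within {0..T})"
    using solution_exists[of "\<chi> c. pop x0 c"] by blast
  show ?thesis
  proof (rule that[of "\<lambda>t. mk_state (vec_nth (v t))"])
    show "mk_state (vec_nth (v 0)) = x0"
      by (rule state_eqI) (simp add: v0)
    fix t c assume t: "t \<in> {0..T}"
    have "((\<lambda>s. v s $ c) has_vector_derivative clamped_field \<beta> t (v t) $ c) (at t within {0..T})"
      by (rule bounded_linear.has_vector_derivative[OF bounded_linear_vec_nth v'[OF t]])
    then show "((\<lambda>s. pop (mk_state (vec_nth (v s))) c) has_real_derivative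
        rhs P \<theta> t (\<beta> t) (clamp_state (mk_state (vec_nth (v t)))) c) (at t within {0..T})"
      by (simp add: clamped_field_def has_real_derivative_iff_has_vector_derivative)
  qed
qed

end

locale clamped_trajectory = epidemic_ivp +
  fixes \<beta> :: "real \<Rightarrow> real" and x :: "real \<Rightarrow> state"
  assumes \<beta>: "admissible_beta \<beta>" and x_0: "x 0 = x0"
    and x_deriv: "\<And>t c. t \<in> {0..T} \<Longrightarrow>
       ((\<lambda>s. pop (x s) c) has_real_derivative rhs P \<theta> t (\<beta> t) (clamp_state (x t)) c) (at t within {0..T})"
begin

lemma nonneg_compartment:
  assumes t: "t \<in> {0..T}" and "c \<noteq> Susc"
  shows "0 \<le> pop (x t) c"
proof (rule nonneg_if_deriv_nonneg_when_slightly_neg[where u = "\<lambda>s. pop (x s) c" and \<delta> = "1::real",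
      OF x_deriv _ _ _ t])
  show "0 \<le> pop (x 0) c"
    using x0_nonneg x_0 by (simp add: nonneg_state_def)
  fix s assume s: "s \<in> {0..T}" and "pop (x s) c < 0"
  then have "pop (clamp_state (x s)) c = 0"
    using \<open>c \<noteq> Susc\<close> lower_bound_le_N_max[of c] by (simp add: pop_clamp_state lower_bound_def)
  then show "0 \<le> rhs P \<theta> s (\<beta> s) (clamp_state (x s)) c"
    using admissible_beta_in_unit[OF \<beta> s] \<theta>_bounds[OF s] nonneg_clamp_state Ntot_clamp_state_pos \<open>c \<noteq> Susc\<close>
    by (intro rhs_nonneg_if_empty[OF P]) auto
qed auto

lemma S_lower_bound:
  assumes t: "t \<in> {0..T}"
  shows "S_min \<le> xS (x t)"
proof -
  define r where "r = infectivity_sum P + mu P"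
  define q where "q s = xS x0 * exp (- (r * s))" for s
  have "0 < r"
    using infectivity_sum_pos admissible_params_pos(1)[OF P] by (simp add: r_def)
  have "0 \<le> xS (x t) - q t"
  proof (rule nonneg_if_deriv_nonneg_when_slightly_neg[where u = "\<lambda>s. xS (x s) - q s" and \<delta> = "1::real",
        OF _ _ _ _ t])
    fix s assume s: "s \<in> {0..T}"
    show "((\<lambda>s. xS (x s) - q s) has_real_derivative rhs P \<theta> s (\<beta> s) (clamp_state (x s)) Susc + r * q s)
        (at s within {0..T})"
      using x_deriv[OF s, of Susc] unfolding q_def
      by (auto intro!: derivative_eq_intros simp: algebra_simps)
    assume "xS (x s) - q s < 0"
    then have "xS (clamp_state (x s)) \<le> q s"
      using S_min_le_S_decay[of s] s pop_clamp_state[of "x s" Susc]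
      by (simp add: q_def r_def lower_bound_def)
    then have "- r * q s \<le> - r * xS (clamp_state (x s))"
      using \<open>0 < r\<close> by simp
    also have "\<dots> \<le> rhs P \<theta> s (\<beta> s) (clamp_state (x s)) Susc"
      unfolding r_def using admissible_beta_in_unit[OF \<beta> s] nonneg_clamp_state Ntot_clamp_state_pos
      by (intro rhs_Susc_ge[OF P]) auto
    finally show "0 \<le> rhs P \<theta> s (\<beta> s) (clamp_state (x s)) Susc + r * q s"
      by simp
  qed (simp_all add: x_0 q_def)
  then show ?thesis
    using S_min_le_S_decay[of t] t by (simp add: q_def r_def)
qed

lemma Ntot_upper_bound:
  assumes t: "t \<in> {0..T}"
  shows "Ntot (x t) \<le> N_max"
proof -
  have "0 \<le> N_max - Ntot (x t)"
  proof (rule nonneg_if_deriv_nonneg_when_slightly_neg[where u = "\<lambda>s. N_max - Ntot (x s)" and \<delta> = "1::real",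
        OF _ _ _ _ t])
    fix s assume s: "s \<in> {0..T}"
    show "((\<lambda>s. N_max - Ntot (x s)) has_real_derivative
        - (\<Sum>c\<in>UNIV. rhs P \<theta> s (\<beta> s) (clamp_state (x s)) c)) (at s within {0..T})"
      unfolding Ntot_eq_sum using x_deriv[OF s] by (auto intro!: derivative_eq_intros DERIV_sum)
    assume "N_max - Ntot (x s) < 0"
    moreover have "lower_bound c \<le> pop (x s) c" for c
      using S_lower_bound[OF s] nonneg_compartment[OF s, of c] by (cases "c = Susc") (simp_all add: lower_bound_def)
    ultimately have "mu P * N_max \<le> mu P * Ntot (clamp_state (x s))"
      using admissible_params_pos(1)[OF P] N_max_le_Ntot_clamp_state[of "x s"] by simp
    moreover have "0 \<le> dI P * (xIfc (clamp_state (x s)) + xIpc (clamp_state (x s)))" "0 \<le> dH P * xH (clamp_state (x s))"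
      using admissible_params_pos[OF P] nonneg_stateD[OF nonneg_clamp_state] by simp_all
    ultimately show "0 \<le> - (\<Sum>c\<in>UNIV. rhs P \<theta> s (\<beta> s) (clamp_state (x s)) c)"
      using total_input_le[of s] unfolding sum_rhs by linarith
  qed (simp_all add: x_0 Ntot_x0_le_N_max)
  then show ?thesis
    by simp
qed

lemma feasible_trajectory:
  assumes t: "t \<in> {0..T}"
  shows "feasible (x t)"
proof -
  have "0 \<le> pop (x t) c" for c
    using S_lower_bound[OF t] S_min_pos nonneg_compartment[OF t, of c] by (cases "c = Susc") auto
  then show ?thesis
    using S_lower_bound[OF t] Ntot_upper_bound[OF t] by (simp add: feasible_def nonneg_state_def)
qed

lemma is_solution_trajectory: "is_solution P T \<theta> \<beta> x0 x"
  unfolding is_solution_iff using x_0 x_deriv clamp_state_feasible[OF feasible_trajectory] by simp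

end

context epidemic_ivp
begin

lemma feasible_solution_exists:
  assumes \<beta>: "admissible_beta \<beta>"
  obtains x where "is_solution P T \<theta> \<beta> x0 x" "\<And>t. t \<in> {0..T} \<Longrightarrow> feasible (x t)"
proof -
  obtain x where "x 0 = x0" "\<And>t c. t \<in> {0..T} \<Longrightarrow>
      ((\<lambda>s. pop (x s) c) has_real_derivative rhs P \<theta> t (\<beta> t) (clamp_state (x t)) c) (at t within {0..T})"
    using clamped_solution_exists[OF \<beta>] by blast
  then interpret clamped_trajectory P T \<beta>lo \<beta>hi \<theta> x0 \<beta> x
    using \<beta> by unfold_locales
  show ?thesis
    using that is_solution_trajectory feasible_trajectory by blast
qed

lemma sdist2_solutions_has_real_derivative:
  assumes "is_solution P T \<theta> \<beta> x0 x" "is_solution P T \<theta> \<beta>' x0 x'" "s \<in> {0..T}"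
  shows "((\<lambda>s. sdist2 (x s) (x' s)) has_real_derivative
      (\<Sum>c\<in>UNIV. 2 * (pop (x s) c - pop (x' s) c) * (rhs P \<theta> s (\<beta> s) (x s) c - rhs P \<theta> s (\<beta>' s) (x' s) c)))
    (at s within {0..T})"
  using assms by (intro sdist2_has_real_derivative) (auto simp: is_solution_iff)

lemma solution_unique:
  assumes \<beta>: "admissible_beta \<beta>" and x: "is_solution P T \<theta> \<beta> x0 x"
    and x_feasible: "\<And>t. t \<in> {0..T} \<Longrightarrow> feasible (x t)"
    and z: "is_solution P T \<theta> \<beta> x0 z" and t: "t \<in> {0..T}"
  shows "z t = x t"
proof -
  obtain L where L: "energy_bound L"
    using energy_bound_exists by blast
  have "sdist2 (x t) (z t) = 0"
  proof (rule zero_if_deriv_le_mult_near_zero[where \<delta> = near_radius and L = "21 * L",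
        OF sdist2_solutions_has_real_derivative[OF x z] _ _ near_radius_pos _ _ t])
    fix s assume s: "s \<in> {0..T}" and "sdist2 (x s) (z s) < near_radius"
    then have "z s \<in> working_region"
      using near_feasible_in_working_region x_feasible[OF s] by simp
    with s show "(\<Sum>c\<in>UNIV. 2 * (pop (x s) c - pop (z s) c) *
        (rhs P \<theta> s (\<beta> s) (x s) c - rhs P \<theta> s (\<beta> s) (z s) c)) \<le> 21 * L * sdist2 (x s) (z s)"
      using energy_boundD[OF L s admissible_beta_in_unit[OF \<beta> s] admissible_beta_in_unit[OF \<beta> s]
          feasible_in_working_region[OF x_feasible[OF s]]]
      by simp
  qed (use x z L in \<open>simp_all add: is_solution_iff sdist2_nonneg sdist2_eq_0_iff energy_bound_def\<close>)
  then show ?thesis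
    by (simp add: sdist2_eq_0_iff)
qed

lemma solution_feasible:
  assumes \<beta>: "admissible_beta \<beta>" and z: "is_solution P T \<theta> \<beta> x0 z" and t: "t \<in> {0..T}"
  shows "feasible (z t)"
proof -
  obtain x where x: "is_solution P T \<theta> \<beta> x0 x" and x_feasible: "\<And>t. t \<in> {0..T} \<Longrightarrow> feasible (x t)"
    using feasible_solution_exists[OF \<beta>] by blast
  show ?thesis
    using solution_unique[OF \<beta> x x_feasible z t] x_feasible[OF t] by simp
qed

lemma solution_distance_le:
  assumes L: "energy_bound L" and \<beta>: "admissible_beta \<beta>" and \<beta>': "admissible_beta \<beta>'"
    and x: "is_solution P T \<theta> \<beta> x0 x" and x': "is_solution P T \<theta> \<beta>' x0 x'" and t: "t \<in> {0..T}"
  shows "sdist2 (x t) (x' t) \<le> exp (21 * L * t) * (L * integral {0..t} (\<lambda>s. (\<beta> s - \<beta>' s)\<^sup>2))"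
proof -
  have "0 \<le> L"
    using L by (simp add: energy_bound_def)
  have sub: "{0..t} \<subseteq> {0..T}"
    using t by simp
  have "sdist2 (x t) (x' t) \<le> exp (21 * L * (t - 0)) *
      (sdist2 (x 0) (x' 0) + integral {0..t} (\<lambda>s. L * (\<beta> s - \<beta>' s)\<^sup>2))"
  proof (rule gronwall[where u = "\<lambda>s. sdist2 (x s) (x' s)"])
    fix s assume "s \<in> {0..t}"
    with sub have s: "s \<in> {0..T}"
      by blast
    show "((\<lambda>s. sdist2 (x s) (x' s)) has_real_derivative (\<Sum>c\<in>UNIV. 2 * (pop (x s) c - pop (x' s) c) *
        (rhs P \<theta> s (\<beta> s) (x s) c - rhs P \<theta> s (\<beta>' s) (x' s) c))) (at s within {0..t})"
      by (rule DERIV_subset[OF sdist2_solutions_has_real_derivative[OF x x' s] sub])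
    show "(\<Sum>c\<in>UNIV. 2 * (pop (x s) c - pop (x' s) c) * (rhs P \<theta> s (\<beta> s) (x s) c - rhs P \<theta> s (\<beta>' s) (x' s) c))
        \<le> 21 * L * sdist2 (x s) (x' s) + L * (\<beta> s - \<beta>' s)\<^sup>2"
      by (rule energy_boundD[OF L s admissible_beta_in_unit[OF \<beta> s] admissible_beta_in_unit[OF \<beta>' s]
            feasible_in_working_region[OF solution_feasible[OF \<beta> x s]]
            feasible_in_working_region[OF solution_feasible[OF \<beta>' x' s]]])
    show "0 \<le> L * (\<beta> s - \<beta>' s)\<^sup>2"
      using \<open>0 \<le> L\<close> by simp
  next
    show "continuous_on {0..t} (\<lambda>s. L * (\<beta> s - \<beta>' s)\<^sup>2)"
      using \<beta> \<beta>' sub unfolding admissible_beta_def by (auto intro!: continuous_intros intro: continuous_on_subset)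
  qed (use t \<open>0 \<le> L\<close> in auto)
  then show ?thesis
    using x x' by (simp add: is_solution_iff sdist2_def)
qed

lemma solution_stability:
  obtains C where "0 < C"
    "\<And>\<beta> \<beta>' x x' t. admissible_beta \<beta> \<Longrightarrow> admissible_beta \<beta>' \<Longrightarrow>
       is_solution P T \<theta> \<beta> x0 x \<Longrightarrow> is_solution P T \<theta> \<beta>' x0 x' \<Longrightarrow> t \<in> {0..T} \<Longrightarrow>
       sdist2 (x t) (x' t) \<le> C * integral {0..t} (\<lambda>s. (\<beta> s - \<beta>' s)\<^sup>2)"
proof -
  obtain L where L: "energy_bound L"
    using energy_bound_exists by blast
  then have "0 \<le> L"
    by (simp add: energy_bound_def)
  show ?thesis
  proof (rule that[of "exp (21 * L * T) * L + 1"])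
    show "0 < exp (21 * L * T) * L + 1"
      using \<open>0 \<le> L\<close> by (simp add: add_nonneg_pos)
    fix \<beta> \<beta>' x x' t
    assume \<beta>: "admissible_beta \<beta>" and \<beta>': "admissible_beta \<beta>'"
      and x: "is_solution P T \<theta> \<beta> x0 x" and x': "is_solution P T \<theta> \<beta>' x0 x'" and t: "t \<in> {0..T}"
    define I where "I = integral {0..t} (\<lambda>s. (\<beta> s - \<beta>' s)\<^sup>2)"
    have "0 \<le> I"
      unfolding I_def using \<beta> \<beta>' t unfolding admissible_beta_def
      by (intro integral_nonneg integrable_continuous_real)
        (auto intro!: continuous_intros intro: continuous_on_subset)
    have "exp (21 * L * t) * L \<le> exp (21 * L * T) * L"
      using t \<open>0 \<le> L\<close> by (intro mult_right_mono) (auto intro: mult_left_mono)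
    then have "exp (21 * L * t) * (L * I) \<le> (exp (21 * L * T) * L + 1) * I"
      using \<open>0 \<le> I\<close> by (simp add: distrib_right mult.assoc[symmetric] add_increasing2 mult_right_mono)
    with solution_distance_le[OF L \<beta> \<beta>' x x' t]
    show "sdist2 (x t) (x' t) \<le> (exp (21 * L * T) * L + 1) * integral {0..t} (\<lambda>s. (\<beta> s - \<beta>' s)\<^sup>2)"
      by (simp add: I_def)
  qed
qed

end

theorem proposition3:
  fixes P :: params and T \<beta>lo \<beta>hi :: real and \<theta> :: "real \<Rightarrow> real" and x0 :: state
  assumes "admissible_params P"
    and "0 < \<beta>lo" and "\<beta>lo \<le> \<beta>hi" and "\<beta>hi \<le> 1"
    and "0 < T"
    and "continuous_on {0..T} \<theta>" and "\<forall>t\<in>{0..T}. 0 \<le> \<theta> t \<and> \<theta> t \<le> 1"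
    and "0 < xS x0" and "0 \<le> xEfc x0" and "0 \<le> xEpc x0" and "0 \<le> xIfc x0"
    and "0 \<le> xIpc x0" and "0 \<le> xH x0" and "0 \<le> xR x0"
  shows
    "(\<forall>\<beta>. continuous_on {0..T} \<beta> \<and> (\<forall>t\<in>{0..T}. \<beta>lo \<le> \<beta> t \<and> \<beta> t \<le> \<beta>hi) \<longrightarrow>
        (\<exists>x. is_solution P T \<theta> \<beta> x0 x \<and>
           (\<forall>y. is_solution P T \<theta> \<beta> x0 y \<longrightarrow> (\<forall>t\<in>{0..T}. y t = x t)))) \<and>
     (\<exists>C>0. \<forall>\<beta> \<beta>' x x'.
        continuous_on {0..T} \<beta> \<and> (\<forall>t\<in>{0..T}. \<beta>lo \<le> \<beta> t \<and> \<beta> t \<le> \<beta>hi) \<and>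
        continuous_on {0..T} \<beta>' \<and> (\<forall>t\<in>{0..T}. \<beta>lo \<le> \<beta>' t \<and> \<beta>' t \<le> \<beta>hi) \<and>
        is_solution P T \<theta> \<beta> x0 x \<and> is_solution P T \<theta> \<beta>' x0 x' \<longrightarrow>
        (\<forall>t\<in>{0..T}. sdist2 (x t) (x' t) \<le> C * integral {0..t} (\<lambda>s. (\<beta> s - \<beta>' s)\<^sup>2)))"
proof -
  interpret epidemic_ivp P T \<beta>lo \<beta>hi \<theta> x0
    using assms by unfold_locales (auto simp: nonneg_state_def all_compartments)
  have well_posed: "\<exists>x. is_solution P T \<theta> \<beta> x0 x \<and> (\<forall>y. is_solution P T \<theta> \<beta> x0 y \<longrightarrow> (\<forall>t\<in>{0..T}. y t = x t))"
    if "admissible_beta \<beta>" for \<beta>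
    using feasible_solution_exists[OF that] solution_unique[OF that] by metis
  obtain C where "0 < C" and stable:
    "\<And>\<beta> \<beta>' x x' t. admissible_beta \<beta> \<Longrightarrow> admissible_beta \<beta>' \<Longrightarrow>
       is_solution P T \<theta> \<beta> x0 x \<Longrightarrow> is_solution P T \<theta> \<beta>' x0 x' \<Longrightarrow> t \<in> {0..T} \<Longrightarrow>
       sdist2 (x t) (x' t) \<le> C * integral {0..t} (\<lambda>s. (\<beta> s - \<beta>' s)\<^sup>2)"
    using solution_stability by blast
  show ?thesis
    using well_posed stable \<open>0 < C\<close> unfolding admissible_beta_def by blast
qed

end
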